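(* For any $k\in\mathbb{N}^{d+1}$, any label $\mathfrak l\in\mathfrak L$ and any $\hat F\in\mathcal{D}_{\mathfrak l}\otimes\mathscr{P}$ one has $$\partial^k\hat F=k!\sum_{(\vec q,\vec m)\in I(k)}\Biggl[\prod_{1\le i\le r_{(\vec q,\vec m)}}\ \prod_{(\mathfrak t,p)\in\mathcal E}\frac{1}{m_i[(\mathfrak t,p)]!}\Bigl(\frac{1}{q_i!}\mathfrak X_{(\mathfrak t,p+q_i)}\Bigr)^{m_i[(\mathfrak t,p)]}\Biggr]D^{|\vec m|}\hat F,$$ where $m_i[(\mathfrak t,p)]$ is the $(\mathfrak t,p)$-component of $m_i$, and multiplication by the monomials $\mathfrak X_o$ acts on the $\mathscr P$-factor.
   Context: Fix $d\ge1$, a finite set $\mathfrak L$ of labels, and $\mathcal E=\mathfrak L\times\mathbb{N}^{d+1}$. Let $(\mathfrak X_o)_{o\in\mathcal E}$ be commuting indeterminates and $\mathscr P$ the real algebra of smooth functions of finitely many of them. For $o\in\mathcal E$, $D_o:\mathscr P\to\mathscr P$ is differentiation with respect to $\mathfrak X_o$; for $i\in\{0,\dots,d\}$, with $e_i$ the canonical basis vectors of $\mathbb{R}^{d+1}$, set $\partial_i\mathfrak X_{(\mathfrak t,p)}=\mathfrak X_{(\mathfrak t,p+e_i)}$ and $\partial_iF=\sum_o\partial_i\mathfrak X_o\,D_oF$. For each $\mathfrak l\in\mathfrak L$ a finite subset $\mathcal E_+(\mathfrak l)\subset\mathcal E$ is given, and for a fixed integer $k_\star$, $\mathcal D_{\mathfrak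 l}$ is the commutative unital algebra generated by symbols $\{\mathfrak d_o\}_{o\in\mathcal E_+(\mathfrak l)}$ quotiented by the ideal generated by monomials $\mathfrak d^\alpha$ with $\max_o\alpha_o>k_\star$. On $\mathcal D_{\mathfrak l}$ set $D_o\mathfrak d=\mathfrak d_o\cdot\mathfrak d$ if $o\in\mathcal E_+(\mathfrak l)$ and $D_o\mathfrak d=0$ otherwise; extend to $\mathcal D_{\mathfrak l}\otimes\mathscr P$ by $D_o(\mathfrak d\otimes F)=\mathfrak d\otimes D_oF+D_o\mathfrak d\otimes F$ and set $\partial_i(\mathfrak d\otimes F)=\mathfrak d\otimes\partial_iF+\sum_{o\in\mathcal E}D_o\mathfrak d\otimes F\,\partial_i\mathfrak X_o$. Write $\partial^k=\prod_i\partial_i^{k_i}$ and, for $m\in\mathbb N^{\mathcal E}$ (finitely supported), $D^m=\prod_oD_o^{m[o]}$. Using the lexicographic order on $\mathbb N^{d+1}$, let $I(r,k)$ be the set of pairs $(\vec q,\vec m)\in(\mathbb N^{d+1})^r\times(\mathbb N^{\mathcal E}\setminus\{0\})^r$ with $0<q_1<\dots<q_r$ and $\sum_{i=1}^r|m_i|\,q_i=k$, and $I(k)=\bigsqcup_{r\ge0}I(r,k)$; for $(\vec q,\vec m)\in I(r,k)$ write $r_{(\vec q,\vec m)}=r$ and $|\vec m|=\sum_im_i$. *)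

theory Defs
  imports "HOL-Analysis.Analysis" "HOL-Library.Groups_Big_Fun"
begin

text \<open>Indices o = (label, p) with p a multi-index; in E exactly when p has length d+1.
  Elements of P are real functions of an assignment of reals to all indeterminates;
  an element of D_l tensor P is given by its P-coefficients on the monomial basis
  (exponent vectors alpha with support in E_+(l) and all exponents at most kstar).\<close>

type_synonym 'l idx = "'l \<times> nat list"
type_synonym 'l asg = "'l idx \<Rightarrow> real"
type_synonym 'l pfun = "'l asg \<Rightarrow> real"
type_synonym 'l mon = "'l idx \<Rightarrow> nat"
type_synonym 'l tens = "'l mon \<Rightarrow> 'l pfun"

definition Eset :: "nat \<Rightarrow> 'l idx set" where
  "Eset d = {e. length (snd e) = d + 1}"

definition pD :: "'l idx \<Rightarrow> 'l pfun \<Rightarrow> 'l pfun" where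
  "pD e F = (\<lambda>x. deriv (\<lambda>t. F (x(e := t))) (x e))"

fun pDs :: "'l idx list \<Rightarrow> 'l pfun \<Rightarrow> 'l pfun" where
  "pDs [] F = F"
| "pDs (e # es) F = pD e (pDs es F)"

definition smooth_fin :: "nat \<Rightarrow> 'l pfun \<Rightarrow> bool" where
  "smooth_fin d F \<longleftrightarrow>
     (\<exists>S. finite S \<and> S \<subseteq> Eset d \<and> (\<forall>x y. (\<forall>e\<in>S. x e = y e) \<longrightarrow> F x = F y)) \<and>
     (\<forall>es. continuous_on UNIV (pDs es F) \<and>
           (\<forall>x e. (\<lambda>t. pDs es F (x(e := t))) differentiable (at (x e))))"

definition shift_i :: "nat \<Rightarrow> 'l idx \<Rightarrow> 'l idx" where
  "shift_i i e = (fst e, (snd e)[i := snd e ! i + 1])"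

definition vadd :: "nat list \<Rightarrow> nat list \<Rightarrow> nat list" where
  "vadd p q = map2 (+) p q"

definition shift_q :: "nat list \<Rightarrow> 'l idx \<Rightarrow> 'l idx" where
  "shift_q q e = (fst e, vadd (snd e) q)"

definition vfact :: "nat list \<Rightarrow> real" where
  "vfact q = (\<Prod>j<length q. fact (q ! j))"

text \<open>partial_i on P: sum over o of (partial_i X_o) * D_o F.\<close>
definition dP :: "nat \<Rightarrow> 'l pfun \<Rightarrow> 'l pfun" where
  "dP i F = (\<lambda>x. Sum_any (\<lambda>e. x (shift_i i e) * pD e F x))"

definition valid_mon :: "('l \<Rightarrow> 'l idx set) \<Rightarrow> nat \<Rightarrow> 'l \<Rightarrow> 'l mon \<Rightarrow> bool" where
  "valid_mon Ep ks l \<alpha> \<longleftrightarrow> (\<forall>e. \<alpha> e \<noteq> 0 \<longrightarrow> e \<in> Ep l) \<and> (\<forall>e. \<alpha> e \<le> ks)"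

definition in_tens :: "nat \<Rightarrow> ('l \<Rightarrow> 'l idx set) \<Rightarrow> nat \<Rightarrow> 'l \<Rightarrow> 'l tens \<Rightarrow> bool" where
  "in_tens d Ep ks l Fh \<longleftrightarrow>
     (\<forall>\<alpha>. valid_mon Ep ks l \<alpha> \<longrightarrow> smooth_fin d (Fh \<alpha>)) \<and>
     (\<forall>\<alpha>. \<not> valid_mon Ep ks l \<alpha> \<longrightarrow> Fh \<alpha> = (\<lambda>_. 0))"

text \<open>D_o on D_l tensor P: D_o(d^beta (x) F) = d^beta (x) D_o F + d_o d^beta (x) F.\<close>
definition tD :: "('l \<Rightarrow> 'l idx set) \<Rightarrow> nat \<Rightarrow> 'l \<Rightarrow> 'l idx \<Rightarrow> 'l tens \<Rightarrow> 'l tens" where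
  "tD Ep ks l e Fh = (\<lambda>\<alpha>. if valid_mon Ep ks l \<alpha> then
      (\<lambda>x. pD e (Fh \<alpha>) x + (if e \<in> Ep l \<and> 1 \<le> \<alpha> e then Fh (\<alpha>(e := \<alpha> e - 1)) x else 0))
    else (\<lambda>_. 0))"

text \<open>partial_i on D_l tensor P: d (x) partial_i F + sum_o D_o d (x) F * partial_i X_o.\<close>
definition tdi :: "('l \<Rightarrow> 'l idx set) \<Rightarrow> nat \<Rightarrow> 'l \<Rightarrow> nat \<Rightarrow> 'l tens \<Rightarrow> 'l tens" where
  "tdi Ep ks l i Fh = (\<lambda>\<alpha>. if valid_mon Ep ks l \<alpha> then
      (\<lambda>x. dP i (Fh \<alpha>) x +
           (\<Sum>e\<in>{e\<in>Ep l. 1 \<le> \<alpha> e}. Fh (\<alpha>(e := \<alpha> e - 1)) x * x (shift_i i e)))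
    else (\<lambda>_. 0))"

definition tdk :: "('l \<Rightarrow> 'l idx set) \<Rightarrow> nat \<Rightarrow> 'l \<Rightarrow> nat list \<Rightarrow> 'l tens \<Rightarrow> 'l tens" where
  "tdk Ep ks l k = foldr (\<lambda>i G. (tdi Ep ks l i ^^ (k ! i)) \<circ> G) [0..<length k] id"

text \<open>D^m = prod_o D_o^(m[o]) (the D_o commute; an arbitrary enumeration of the support is used).\<close>
definition tDm :: "('l \<Rightarrow> 'l idx set) \<Rightarrow> nat \<Rightarrow> 'l \<Rightarrow> 'l mon \<Rightarrow> 'l tens \<Rightarrow> 'l tens" where
  "tDm Ep ks l m = (let es = (SOME es. distinct es \<and> set es = {e. m e \<noteq> 0})
                    in foldr (\<lambda>e G. (tD Ep ks l e ^^ m e) \<circ> G) es id)"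

definition lexless :: "nat list \<Rightarrow> nat list \<Rightarrow> bool" where
  "lexless p q \<longleftrightarrow> length p = length q \<and>
     (\<exists>j<length p. take j p = take j q \<and> p ! j < q ! j)"

definition msize :: "'l mon \<Rightarrow> nat" where
  "msize m = Sum_any m"

definition msum :: "'l mon list \<Rightarrow> 'l mon" where
  "msum ms = (\<lambda>e. \<Sum>m\<leftarrow>ms. m e)"

definition Iset :: "nat \<Rightarrow> nat list \<Rightarrow> (nat list list \<times> 'l mon list) set" where
  "Iset d k = {(qs, ms). length qs = length ms \<and>
      (\<forall>q\<in>set qs. length q = d + 1 \<and> lexless (replicate (d + 1) 0) q) \<and>
      sorted_wrt lexless qs \<and>
      (\<forall>m\<in>set ms. finite {e. m e \<noteq> 0} \<and> {e. m e \<noteq> 0} \<subseteq> Eset d \<and> m \<noteq> (\<lambda>_. 0)) \<and>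
      (\<forall>j\<le>d. (\<Sum>i<length qs. msize (ms ! i) * (qs ! i) ! j) = k ! j)}"

definition coef :: "nat list list \<Rightarrow> 'l mon list \<Rightarrow> 'l pfun" where
  "coef qs ms = (\<lambda>x. \<Prod>i<length qs. \<Prod>e\<in>{e. (ms ! i) e \<noteq> 0}.
       (1 / fact ((ms ! i) e)) * ((1 / vfact (qs ! i)) * x (shift_q (qs ! i) e)) ^ ((ms ! i) e))"

end

(* On \<D>_l \<otimes> \<P> the derivation \<partial>_i is \<Sum>_o X_{o+e_i} D_o, where D_o differentiates the smooth
   coefficients and lowers the \<D>_l-monomial.  By Schwarz's theorem the D_o commute, so D^\<nu> is
   well defined for a multiset \<nu> of indices.  Induction on k, one \<partial>_i at a time, gives
     \<partial>^k F = k! \<Sum>_\<nu> c_\<nu> D^{snd \<nu>} F,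
   the sum ranging over multisets \<nu> of pairs (q, o) with q \<noteq> 0 and \<Sum> q = k, and c_\<nu> the
   normalised monomial \<Prod> (1/m!) (X_{o+q}/q!)^m: applying \<partial>_i either raises one q by e_i (from
   differentiating c_\<nu>) or adds a pair (e_i, o) (from D_o), and for each target multiset the
   contributions add up to k_i + 1.  Sorting the distinct q's lexicographically turns these
   multisets into the elements of I(k); elements involving indices on which F does not depend
   contribute zero. *)
theory Submission
  imports Defs "HOL-Library.Multiset" "HOL-Library.List_Lexorder"
begin


section \<open>Smooth functions of the indeterminates\<close>

definition pdifferentiable :: "'l idx \<Rightarrow> 'l pfun \<Rightarrow> bool" where
  "pdifferentiable e F \<longleftrightarrow> (\<forall>x. (\<lambda>t. F (x(e := t))) differentiable (at (x e)))"

definition smooth :: "'l pfun \<Rightarrow> bool" where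
  "smooth F \<longleftrightarrow> (\<forall>es. continuous_on UNIV (pDs es F) \<and> (\<forall>e. pdifferentiable e (pDs es F)))"

definition depends_only_on :: "'l idx set \<Rightarrow> 'l pfun \<Rightarrow> bool" where
  "depends_only_on S F \<longleftrightarrow> (\<forall>x y. (\<forall>e\<in>S. x e = y e) \<longrightarrow> F x = F y)"

lemma smooth_fin_imp_smooth: "smooth_fin d F \<Longrightarrow> smooth F"
  unfolding smooth_fin_def smooth_def pdifferentiable_def by blast

lemma smooth_fin_imp_depends_only_on:
  "smooth_fin d F \<Longrightarrow> \<exists>S. finite S \<and> S \<subseteq> Eset d \<and> depends_only_on S F"
  unfolding smooth_fin_def depends_only_on_def by blast

lemma has_real_derivative_pD:
  assumes "pdifferentiable e F"
  shows "((\<lambda>t. F (x(e := t))) has_real_derivative pD e F (x(e := s))) (at s)"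
proof -
  have "(\<lambda>t. F ((x(e := s))(e := t))) differentiable (at ((x(e := s)) e))"
    using assms unfolding pdifferentiable_def by blast
  then show ?thesis
    unfolding pD_def by (simp add: DERIV_deriv_iff_real_differentiable[symmetric])
qed

lemma has_real_derivative_pD_at:
  "pdifferentiable e F \<Longrightarrow> ((\<lambda>t. F (x(e := t))) has_real_derivative pD e F x) (at (x e))"
  using has_real_derivative_pD[of e F x "x e"] by simp

lemma pdifferentiableI:
  assumes "\<And>x. \<exists>D. ((\<lambda>t. F (x(e := t))) has_real_derivative D) (at (x e))"
  shows "pdifferentiable e F"
  unfolding pdifferentiable_def using assms real_differentiable_def by blast

lemma pD_eqI:
  "(\<And>x. ((\<lambda>t. F (x(e := t))) has_real_derivative F' x) (at (x e))) \<Longrightarrow> pD e F = F'"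
  unfolding pD_def by (auto intro: DERIV_imp_deriv)

lemma pD_const [simp]: "pD e (\<lambda>x. c) = (\<lambda>x. 0)"
  unfolding pD_def by simp

lemma pdifferentiable_const: "pdifferentiable e (\<lambda>x. c)"
  by (rule pdifferentiableI) (use DERIV_const in blast)

lemma pD_var: "pD e (\<lambda>x. x c) = (\<lambda>x. if c = e then 1 else 0)"
  unfolding pD_def by (auto simp: fun_upd_apply)

lemma pdifferentiable_var: "pdifferentiable e (\<lambda>x. x c)"
  by (rule pdifferentiableI, cases "c = e") (auto intro: DERIV_ident DERIV_const)

lemma pD_add:
  assumes "pdifferentiable e F" "pdifferentiable e G"
  shows "pD e (\<lambda>x. F x + G x) = (\<lambda>x. pD e F x + pD e G x)"
  by (intro pD_eqI DERIV_add has_real_derivative_pD_at assms)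

lemma pdifferentiable_add:
  "pdifferentiable e F \<Longrightarrow> pdifferentiable e G \<Longrightarrow> pdifferentiable e (\<lambda>x. F x + G x)"
  by (rule pdifferentiableI) (use DERIV_add has_real_derivative_pD_at in blast)

lemma pD_mult:
  assumes "pdifferentiable e F" "pdifferentiable e G"
  shows "pD e (\<lambda>x. F x * G x) = (\<lambda>x. pD e F x * G x + F x * pD e G x)"
proof (rule pD_eqI)
  fix x
  show "((\<lambda>t. F (x(e := t)) * G (x(e := t))) has_real_derivative pD e F x * G x + F x * pD e G x)
      (at (x e))"
    using DERIV_mult[OF has_real_derivative_pD_at[OF assms(1), of x]
        has_real_derivative_pD_at[OF assms(2), of x]]
    by (simp add: mult.commute)
qed

lemma pdifferentiable_mult:
  "pdifferentiable e F \<Longrightarrow> pdifferentiable e G \<Longrightarrow> pdifferentiable e (\<lambda>x. F x * G x)"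
  by (rule pdifferentiableI) (use DERIV_mult has_real_derivative_pD_at in blast)

lemma pdifferentiable_sum:
  "finite I \<Longrightarrow> (\<And>i. i \<in> I \<Longrightarrow> pdifferentiable e (f i)) \<Longrightarrow> pdifferentiable e (\<lambda>x. \<Sum>i\<in>I. f i x)"
  by (induction I rule: finite_induct) (auto intro: pdifferentiable_add pdifferentiable_const)

lemma pD_sum:
  "finite I \<Longrightarrow> (\<And>i. i \<in> I \<Longrightarrow> pdifferentiable e (f i)) \<Longrightarrow>
   pD e (\<lambda>x. \<Sum>i\<in>I. f i x) = (\<lambda>x. \<Sum>i\<in>I. pD e (f i) x)"
  by (induction I rule: finite_induct) (simp_all add: pD_add pdifferentiable_sum)

lemma pDs_append: "pDs (es @ fs) F = pDs es (pDs fs F)"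
  by (induction es) auto

lemma smooth_coinduct:
  assumes "A F"
    and "\<And>F. A F \<Longrightarrow> continuous_on UNIV F \<and> (\<forall>e. pdifferentiable e F)"
    and "\<And>F e. A F \<Longrightarrow> A (pD e F)"
  shows "smooth F"
proof -
  have "A (pDs es F)" for es
    by (induction es) (use assms in auto)
  then show ?thesis
    unfolding smooth_def using assms(2) by blast
qed

lemma smooth_pD: "smooth F \<Longrightarrow> smooth (pD e F)"
  unfolding smooth_def by (metis pDs.simps pDs_append append_Cons append_Nil)

lemma smooth_imp_pdifferentiable: "smooth F \<Longrightarrow> pdifferentiable e F"
  unfolding smooth_def by (metis pDs.simps(1))

lemma smooth_imp_continuous: "smooth F \<Longrightarrow> continuous_on UNIV F"
  unfolding smooth_def by (metis pDs.simps(1))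

lemma smooth_const: "smooth (\<lambda>x. c)"
  by (rule smooth_coinduct[where A = "\<lambda>F. \<exists>c. F = (\<lambda>x. c)"])
    (auto intro: pdifferentiable_const)

lemma smooth_var: "smooth (\<lambda>x. x c)"
  by (rule smooth_coinduct[where A = "\<lambda>F. F = (\<lambda>x. x c) \<or> (\<exists>r. F = (\<lambda>x. r))"])
    (auto simp: pD_var pdifferentiable_const pdifferentiable_var)

lemma smooth_add:
  assumes "smooth F" "smooth G"
  shows "smooth (\<lambda>x. F x + G x)"
proof (rule smooth_coinduct[where A = "\<lambda>H. \<exists>F G. smooth F \<and> smooth G \<and> H = (\<lambda>x. F x + G x)"])
  fix H e assume "\<exists>F G. smooth F \<and> smooth G \<and> H = (\<lambda>x. F x + G x)"
  then obtain F G where FG: "smooth F" "smooth G" "H = (\<lambda>x. F x + G x)" by blast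
  then have "pD e H = (\<lambda>x. pD e F x + pD e G x)"
    by (simp add: pD_add smooth_imp_pdifferentiable)
  with FG show "\<exists>F G. smooth F \<and> smooth G \<and> pD e H = (\<lambda>x. F x + G x)"
    using smooth_pD by blast
qed (use assms in \<open>auto intro!: pdifferentiable_add continuous_on_add
         intro: smooth_imp_continuous smooth_imp_pdifferentiable\<close>)

text \<open>Products are not closed under \<open>pD\<close>, but finite sums of products are (Leibniz rule);
  smoothness of a product is proved coinductively over that class.\<close>

definition sum_of_products :: "('l pfun \<times> 'l pfun) list \<Rightarrow> 'l pfun" where
  "sum_of_products L = (\<lambda>x. \<Sum>(F, G)\<leftarrow>L. F x * G x)"

lemma sum_of_products_Cons:
  "sum_of_products ((F, G) # L) = (\<lambda>x. F x * G x + sum_of_products L x)"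
  by (simp add: sum_of_products_def)

lemma pD_sum_of_products:
  assumes "\<forall>(F, G)\<in>set L. smooth F \<and> smooth G"
  shows "pdifferentiable e (sum_of_products L) \<and>
    pD e (sum_of_products L) =
      sum_of_products (map (\<lambda>(F, G). (pD e F, G)) L @ map (\<lambda>(F, G). (F, pD e G)) L)"
  using assms
proof (induction L)
  case Nil
  then show ?case by (simp add: sum_of_products_def pdifferentiable_const)
next
  case (Cons FG L)
  obtain F G where FG: "FG = (F, G)" by fastforce
  have diff: "pdifferentiable e F" "pdifferentiable e G"
    using Cons.prems FG by (auto intro: smooth_imp_pdifferentiable)
  then have "pdifferentiable e (\<lambda>x. F x * G x)" by (rule pdifferentiable_mult)
  with Cons diff show ?case
    unfolding FG sum_of_products_Cons
    by (auto simp: pD_add pD_mult sum_of_products_def intro: pdifferentiable_add)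
qed

lemma continuous_on_sum_of_products:
  "\<forall>(F, G)\<in>set L. smooth F \<and> smooth G \<Longrightarrow> continuous_on UNIV (sum_of_products L)"
proof (induction L)
  case (Cons FG L)
  then show ?case
    by (cases FG) (auto simp: sum_of_products_Cons
        intro!: continuous_on_add continuous_on_mult intro: smooth_imp_continuous)
qed (simp add: sum_of_products_def)

lemma smooth_mult:
  assumes "smooth F" "smooth G"
  shows "smooth (\<lambda>x. F x * G x)"
proof (rule smooth_coinduct[where
      A = "\<lambda>H. \<exists>L. (\<forall>(F, G)\<in>set L. smooth F \<and> smooth G) \<and> H = sum_of_products L"])
  show "\<exists>L. (\<forall>(F, G)\<in>set L. smooth F \<and> smooth G) \<and> (\<lambda>x. F x * G x) = sum_of_products L"
    using assms by (intro exI[of _ "[(F, G)]"]) (auto simp: sum_of_products_def)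
next
  fix H e assume "\<exists>L. (\<forall>(F, G)\<in>set L. smooth F \<and> smooth G) \<and> H = sum_of_products L"
  then obtain L where L: "\<forall>(F, G)\<in>set L. smooth F \<and> smooth G" "H = sum_of_products L" by blast
  then have "\<forall>(F, G)\<in>set (map (\<lambda>(F, G). (pD e F, G)) L @ map (\<lambda>(F, G). (F, pD e G)) L).
      smooth F \<and> smooth G"
    by (auto intro: smooth_pD)
  with L pD_sum_of_products[OF L(1)]
  show "\<exists>L. (\<forall>(F, G)\<in>set L. smooth F \<and> smooth G) \<and> pD e H = sum_of_products L"
    by metis
qed (use pD_sum_of_products continuous_on_sum_of_products in blast)

lemma smooth_sum: "finite I \<Longrightarrow> (\<And>i. i \<in> I \<Longrightarrow> smooth (f i)) \<Longrightarrow> smooth (\<lambda>x. \<Sum>i\<in>I. f i x)"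
  by (induction I rule: finite_induct) (auto intro: smooth_add smooth_const)

lemma smooth_prod: "finite I \<Longrightarrow> (\<And>i. i \<in> I \<Longrightarrow> smooth (f i)) \<Longrightarrow> smooth (\<lambda>x. \<Prod>i\<in>I. f i x)"
  by (induction I rule: finite_induct) (auto intro: smooth_mult smooth_const)

lemma smooth_power: "smooth F \<Longrightarrow> smooth (\<lambda>x. F x ^ n)"
  by (induction n) (auto intro: smooth_mult smooth_const)

lemma pD_prod:
  assumes "finite A" "\<And>a. a \<in> A \<Longrightarrow> smooth (f a)"
  shows "pD e (\<lambda>x. \<Prod>a\<in>A. f a x) x = (\<Sum>a\<in>A. pD e (f a) x * (\<Prod>b\<in>A - {a}. f b x))"
  using assms
proof (induction A rule: finite_induct)
  case empty
  then show ?case by simp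
next
  case (insert a A)
  have "pdifferentiable e (f a)" "pdifferentiable e (\<lambda>x. \<Prod>a\<in>A. f a x)"
    using insert by (auto intro!: smooth_imp_pdifferentiable smooth_prod)
  moreover have "insert a A - {b} = insert a (A - {b})" if "b \<in> A" for b
    using that insert by auto
  ultimately show ?case
    using insert by (simp add: pD_mult sum_distrib_left ac_simps cong: sum.cong)
qed

lemma depends_only_on_mono: "depends_only_on S F \<Longrightarrow> S \<subseteq> T \<Longrightarrow> depends_only_on T F"
  unfolding depends_only_on_def by blast

lemma depends_only_on_const: "depends_only_on S (\<lambda>x. c)"
  unfolding depends_only_on_def by auto

lemma depends_only_on_add:
  "depends_only_on S F \<Longrightarrow> depends_only_on S G \<Longrightarrow> depends_only_on S (\<lambda>x. F x + G x)"
  unfolding depends_only_on_def by metis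

lemma depends_only_on_mult:
  "depends_only_on S F \<Longrightarrow> depends_only_on T G \<Longrightarrow> depends_only_on (S \<union> T) (\<lambda>x. F x * G x)"
  unfolding depends_only_on_def by (metis Un_iff)

lemma depends_only_on_cmult: "depends_only_on S F \<Longrightarrow> depends_only_on S (\<lambda>x. c * F x)"
  unfolding depends_only_on_def by simp

lemma depends_only_on_sum:
  assumes "\<And>a. a \<in> A \<Longrightarrow> depends_only_on S (f a)"
  shows "depends_only_on S (\<lambda>x. \<Sum>a\<in>A. f a x)"
  using assms unfolding depends_only_on_def by (blast intro: sum.cong)

lemma depends_only_on_prod:
  assumes "\<And>a. a \<in> A \<Longrightarrow> depends_only_on S (f a)"
  shows "depends_only_on S (\<lambda>x. \<Prod>a\<in>A. f a x)"
  using assms unfolding depends_only_on_def by (blast intro: prod.cong)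

lemma depends_only_on_pD:
  fixes F :: "'l pfun"
  shows "depends_only_on S F \<Longrightarrow> depends_only_on S (pD e F)"
  unfolding depends_only_on_def pD_def
proof (intro allI impI)
  fix x y :: "'l asg"
  assume F: "\<forall>x y. (\<forall>e\<in>S. x e = y e) \<longrightarrow> F x = F y" and xy: "\<forall>e\<in>S. x e = y e"
  show "deriv (\<lambda>t. F (x(e := t))) (x e) = deriv (\<lambda>t. F (y(e := t))) (y e)"
  proof (cases "e \<in> S")
    case True
    then have "(\<lambda>t. F (x(e := t))) = (\<lambda>t. F (y(e := t)))" using F xy by auto
    then show ?thesis using True xy by simp
  next
    case False
    then have "(\<lambda>t. F (x(e := t))) = (\<lambda>t. F x)" "(\<lambda>t. F (y(e := t))) = (\<lambda>t. F y)"
      using F by auto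
    then show ?thesis by simp
  qed
qed

lemma pD_eq_0_if_independent: "depends_only_on S F \<Longrightarrow> e \<notin> S \<Longrightarrow> pD e F = (\<lambda>x. 0)"
proof
  fix x assume "depends_only_on S F" "e \<notin> S"
  then have "(\<lambda>t. F (x(e := t))) = (\<lambda>t. F x)" unfolding depends_only_on_def by auto
  then show "pD e F x = 0" unfolding pD_def by simp
qed

lemma dP_eq_sum:
  assumes "depends_only_on S F" "finite T" "S \<subseteq> T"
  shows "dP i F x = (\<Sum>u\<in>T. x (shift_i i u) * pD u F x)"
  unfolding dP_def
proof (rule Sum_any.expand_superset[OF assms(2)])
  show "{u. x (shift_i i u) * pD u F x \<noteq> 0} \<subseteq> T"
    using pD_eq_0_if_independent[OF assms(1)] assms(3) by fastforce
qed

lemma dP_cmult: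
  assumes "smooth F" "depends_only_on S F" "finite S"
  shows "dP i (\<lambda>x. c * F x) x = c * dP i F x"
proof -
  have "pD e (\<lambda>x. c * F x) = (\<lambda>x. c * pD e F x)" for e
    using pD_mult[OF pdifferentiable_const smooth_imp_pdifferentiable[OF assms(1)]] by simp
  then show ?thesis
    using assms(2,3) depends_only_on_cmult[OF assms(2)]
    by (simp add: dP_eq_sum[of S] sum_distrib_left ac_simps)
qed

section \<open>Symmetry of second partial derivatives\<close>

lemma continuous_on_fun_upd2:
  "continuous_on UNIV (\<lambda>p::real \<times> real. x(a := fst p, b := snd p))"
proof (rule continuous_on_coordinatewise_then_product)
  fix i
  show "continuous_on UNIV (\<lambda>p::real \<times> real. (x(a := fst p, b := snd p)) i)"
    by (cases "i = b"; cases "i = a") (auto intro: continuous_intros)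
qed

lemma continuous_fun_upd2_eps:
  fixes G :: "'l pfun"
  assumes "continuous_on UNIV G" "\<epsilon> > 0"
  obtains \<delta> where "\<delta> > 0"
    "\<And>s t. \<bar>s - x a\<bar> < \<delta> \<Longrightarrow> \<bar>t - x b\<bar> < \<delta> \<Longrightarrow> \<bar>G (x(a := s, b := t)) - G x\<bar> < \<epsilon>"
proof -
  let ?f = "\<lambda>p::real \<times> real. G (x(a := fst p, b := snd p))"
  have "continuous_on UNIV ?f"
    by (rule continuous_on_compose2[OF assms(1) continuous_on_fun_upd2]) auto
  then have "isCont ?f (x a, x b)"
    using continuous_on_eq_continuous_at by blast
  then obtain \<delta> where \<delta>: "\<delta> > 0" "\<forall>p. dist p (x a, x b) < \<delta> \<longrightarrow> dist (?f p) (?f (x a, x b)) < \<epsilon>"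
    using assms(2) unfolding continuous_at_eps_delta by blast
  show thesis
  proof
    fix s t assume st: "\<bar>s - x a\<bar> < \<delta> / 2" "\<bar>t - x b\<bar> < \<delta> / 2"
    have "dist (s, t) (x a, x b) \<le> \<bar>s - x a\<bar> + \<bar>t - x b\<bar>"
      unfolding dist_Pair_Pair dist_real_def
      using sqrt_sum_squares_le_sum_abs[of "s - x a" "t - x b"] by simp
    then have "dist (?f (s, t)) (?f (x a, x b)) < \<epsilon>" using st \<delta> by auto
    then show "\<bar>G (x(a := s, b := t)) - G x\<bar> < \<epsilon>" by (simp add: dist_real_def)
  qed (use \<delta> in auto)
qed

lemma second_difference_mean_value:
  assumes "smooth F" "a \<noteq> b" "h > 0"
  obtains s t where "\<bar>s - x a\<bar> < h" "\<bar>t - x b\<bar> < h"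
    "F (x(a := x a + h, b := x b + h)) - F (x(a := x a + h)) - F (x(b := x b + h)) + F x =
       h\<^sup>2 * pD b (pD a F) (x(a := s, b := t))"
proof -
  define c where "c = (\<lambda>s t. x(a := s, b := t))"
  define s0 t0 where "s0 = x a" and "t0 = x b"
  have along_a: "((\<lambda>u. G (c u t)) has_real_derivative pD a G (c s t)) (at s)"
    if "pdifferentiable a G" for G s t
    using has_real_derivative_pD[OF that, of "x(b := t)" s] assms(2)
    unfolding c_def by (simp add: fun_upd_twist)
  have along_b: "((\<lambda>v. G (c s v)) has_real_derivative pD b G (c s t)) (at t)"
    if "pdifferentiable b G" for G s t
    using has_real_derivative_pD[OF that, of "x(a := s)" t] unfolding c_def by simp
  have "((\<lambda>u. F (c u (t0 + h)) - F (c u t0)) has_real_derivative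
      pD a F (c u (t0 + h)) - pD a F (c u t0)) (at u)" for u
    using along_a[OF smooth_imp_pdifferentiable[OF assms(1)]] by (intro DERIV_diff)
  then obtain s where s: "s0 < s" "s < s0 + h"
    "(F (c (s0 + h) (t0 + h)) - F (c (s0 + h) t0)) - (F (c s0 (t0 + h)) - F (c s0 t0)) =
      h * (pD a F (c s (t0 + h)) - pD a F (c s t0))"
    using MVT2[of s0 "s0 + h" "\<lambda>u. F (c u (t0 + h)) - F (c u t0)"
        "\<lambda>u. pD a F (c u (t0 + h)) - pD a F (c u t0)"] assms(3) by auto
  obtain t where t: "t0 < t" "t < t0 + h"
    "pD a F (c s (t0 + h)) - pD a F (c s t0) = h * pD b (pD a F) (c s t)"
    using MVT2[of t0 "t0 + h" "\<lambda>v. pD a F (c s v)" "\<lambda>v. pD b (pD a F) (c s v)"]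
      assms(3) along_b[OF smooth_imp_pdifferentiable[OF smooth_pD[OF assms(1)]]]
    by auto
  have "c (s0 + h) t0 = x(a := x a + h)" "c s0 (t0 + h) = x(b := x b + h)" "c s0 t0 = x"
    unfolding c_def s0_def t0_def using assms(2) by (auto simp: fun_eq_iff)
  with s t show thesis
    by (intro that[of s t]) (auto simp: c_def s0_def t0_def power2_eq_square algebra_simps)
qed

lemma mixed_partials_agree_nearby:
  assumes "smooth F" "a \<noteq> b" "h > 0"
  obtains s t s' t' where "\<bar>s - x a\<bar> < h" "\<bar>t - x b\<bar> < h" "\<bar>s' - x a\<bar> < h" "\<bar>t' - x b\<bar> < h"
    "pD b (pD a F) (x(a := s, b := t)) = pD a (pD b F) (x(b := t', a := s'))"
proof -
  obtain s t where st: "\<bar>s - x a\<bar> < h" "\<bar>t - x b\<bar> < h"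
    "F (x(a := x a + h, b := x b + h)) - F (x(a := x a + h)) - F (x(b := x b + h)) + F x =
     h\<^sup>2 * pD b (pD a F) (x(a := s, b := t))"
    by (rule second_difference_mean_value[OF assms])
  obtain s' t' where st': "\<bar>s' - x a\<bar> < h" "\<bar>t' - x b\<bar> < h"
    "F (x(b := x b + h, a := x a + h)) - F (x(b := x b + h)) - F (x(a := x a + h)) + F x =
     h\<^sup>2 * pD a (pD b F) (x(b := t', a := s'))"
    by (rule second_difference_mean_value[OF assms(1) assms(2)[symmetric] assms(3)])
  have twist: "x(b := x b + h, a := x a + h) = x(a := x a + h, b := x b + h)"
    using assms(2) by (metis fun_upd_twist)
  have "h\<^sup>2 * pD b (pD a F) (x(a := s, b := t)) = h\<^sup>2 * pD a (pD b F) (x(b := t', a := s'))"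
    using st(3) st'(3)[unfolded twist] by linarith
  with assms(3) st st' show thesis
    using that by simp
qed

theorem pD_commute:
  assumes "smooth F"
  shows "pD a (pD b F) = pD b (pD a F)"
proof
  fix x
  let ?Fab = "pD a (pD b F)" and ?Fba = "pD b (pD a F)"
  have close: "\<bar>?Fab x - ?Fba x\<bar> < 2 * \<epsilon>" if "a \<noteq> b" "\<epsilon> > 0" for \<epsilon>
  proof -
    obtain \<delta>1 where \<delta>1: "\<delta>1 > 0"
      "\<And>s t. \<bar>s - x a\<bar> < \<delta>1 \<Longrightarrow> \<bar>t - x b\<bar> < \<delta>1 \<Longrightarrow> \<bar>?Fba (x(a := s, b := t)) - ?Fba x\<bar> < \<epsilon>"
      using continuous_fun_upd2_eps[OF smooth_imp_continuous \<open>\<epsilon> > 0\<close>]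
        smooth_pD[OF smooth_pD[OF assms]] by metis
    obtain \<delta>2 where \<delta>2: "\<delta>2 > 0"
      "\<And>s t. \<bar>t - x b\<bar> < \<delta>2 \<Longrightarrow> \<bar>s - x a\<bar> < \<delta>2 \<Longrightarrow> \<bar>?Fab (x(b := t, a := s)) - ?Fab x\<bar> < \<epsilon>"
      using continuous_fun_upd2_eps[OF smooth_imp_continuous \<open>\<epsilon> > 0\<close>]
        smooth_pD[OF smooth_pD[OF assms]] by metis
    have h: "min \<delta>1 \<delta>2 > 0" using \<delta>1 \<delta>2 by simp
    obtain s t s' t' where "\<bar>s - x a\<bar> < min \<delta>1 \<delta>2" "\<bar>t - x b\<bar> < min \<delta>1 \<delta>2"
      "\<bar>s' - x a\<bar> < min \<delta>1 \<delta>2" "\<bar>t' - x b\<bar> < min \<delta>1 \<delta>2"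
      "?Fba (x(a := s, b := t)) = ?Fab (x(b := t', a := s'))"
      by (rule mixed_partials_agree_nearby[OF assms \<open>a \<noteq> b\<close> h])
    with \<delta>1(2)[of s t] \<delta>2(2)[of t' s'] show ?thesis by simp
  qed
  show "?Fab x = ?Fba x"
  proof (rule ccontr)
    assume "?Fab x \<noteq> ?Fba x"
    then show False using close[of "\<bar>?Fab x - ?Fba x\<bar> / 2"] by fastforce
  qed
qed

section \<open>The derivations \<open>D\<^sub>o\<close> on \<open>\<D>\<^sub>l \<otimes> \<P>\<close>\<close>

lemma valid_mon_decrement: "valid_mon Ep ks l \<alpha> \<Longrightarrow> valid_mon Ep ks l (\<alpha>(e := \<alpha> e - 1))"
  unfolding valid_mon_def by (metis diff_0_eq_0 diff_le_self fun_upd_apply le_trans)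

locale tensor_ops =
  fixes Ep :: "'l \<Rightarrow> 'l idx set" and ks :: nat and l :: 'l
begin

abbreviation valid :: "'l mon \<Rightarrow> bool" where "valid \<equiv> valid_mon Ep ks l"
abbreviation TD :: "'l idx \<Rightarrow> 'l tens \<Rightarrow> 'l tens" where "TD \<equiv> tD Ep ks l"

definition admissible :: "'l idx set \<Rightarrow> 'l tens \<Rightarrow> bool" where
  "admissible S H \<longleftrightarrow>
     (\<forall>\<alpha>. \<not> valid \<alpha> \<longrightarrow> H \<alpha> = (\<lambda>_. 0)) \<and> (\<forall>\<alpha>. smooth (H \<alpha>)) \<and> (\<forall>\<alpha>. depends_only_on S (H \<alpha>))"

lemma admissible_mono: "admissible S H \<Longrightarrow> S \<subseteq> T \<Longrightarrow> admissible T H"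
  unfolding admissible_def using depends_only_on_mono by blast

lemma tD_valid:
  "valid \<alpha> \<Longrightarrow> TD e H \<alpha> =
     (\<lambda>x. pD e (H \<alpha>) x + (if e \<in> Ep l \<and> 1 \<le> \<alpha> e then H (\<alpha>(e := \<alpha> e - 1)) x else 0))"
  unfolding tD_def by simp

lemma tD_invalid: "\<not> valid \<alpha> \<Longrightarrow> TD e H \<alpha> = (\<lambda>x. 0)"
  unfolding tD_def by simp

lemma admissible_tD:
  assumes "admissible S H"
  shows "admissible S (TD e H)"
proof -
  have if_fun: "(\<lambda>x. F x + (if C then G x else 0)) = (if C then (\<lambda>x. F x + G x) else F)"
    for F G :: "'l pfun" and C by auto
  have "smooth (TD e H \<alpha>) \<and> depends_only_on S (TD e H \<alpha>)" for \<alpha>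
    using assms unfolding admissible_def
    by (cases "valid \<alpha>") (auto simp: tD_valid tD_invalid if_fun smooth_const depends_only_on_const
        intro!: smooth_add smooth_pD depends_only_on_add depends_only_on_pD)
  then show ?thesis
    unfolding admissible_def by (auto simp: tD_invalid)
qed

lemma tD_tD_apply:
  assumes "admissible S H" "valid \<alpha>" "a \<noteq> b"
  shows "TD a (TD b H) \<alpha> x = pD a (pD b (H \<alpha>)) x
     + (if b \<in> Ep l \<and> 1 \<le> \<alpha> b then pD a (H (\<alpha>(b := \<alpha> b - 1))) x else 0)
     + (if a \<in> Ep l \<and> 1 \<le> \<alpha> a then pD b (H (\<alpha>(a := \<alpha> a - 1))) x
         + (if b \<in> Ep l \<and> 1 \<le> \<alpha> b then H (\<alpha>(a := \<alpha> a - 1, b := \<alpha> b - 1)) x else 0) else 0)"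
proof -
  have "pdifferentiable a (H \<beta>)" "pdifferentiable a (pD b (H \<beta>))" for \<beta>
    using assms(1) unfolding admissible_def by (auto intro: smooth_imp_pdifferentiable smooth_pD)
  then have "pD a (TD b H \<alpha>) x = pD a (pD b (H \<alpha>)) x
     + (if b \<in> Ep l \<and> 1 \<le> \<alpha> b then pD a (H (\<alpha>(b := \<alpha> b - 1))) x else 0)"
    using assms(2) by (auto simp: tD_valid pD_add)
  moreover have "TD b H (\<alpha>(a := \<alpha> a - 1)) x = pD b (H (\<alpha>(a := \<alpha> a - 1))) x
      + (if b \<in> Ep l \<and> 1 \<le> \<alpha> b then H (\<alpha>(a := \<alpha> a - 1, b := \<alpha> b - 1)) x else 0)"
    using tD_valid[OF valid_mon_decrement[OF assms(2)], of b H] assms(3) by simp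
  ultimately show ?thesis
    using tD_valid[OF assms(2), of a "TD b H"] by simp
qed

lemma tD_commute:
  assumes "admissible S H"
  shows "TD a (TD b H) = TD b (TD a H)"
proof (intro ext)
  fix \<alpha> x
  show "TD a (TD b H) \<alpha> x = TD b (TD a H) \<alpha> x"
  proof (cases "valid \<alpha> \<and> a \<noteq> b")
    case True
    have "smooth (H \<alpha>)" using assms unfolding admissible_def by blast
    moreover have "\<alpha>(a := \<alpha> a - 1, b := \<alpha> b - 1) = \<alpha>(b := \<alpha> b - 1, a := \<alpha> a - 1)"
      using True by (metis fun_upd_twist)
    ultimately show ?thesis
      using True by (auto simp: tD_tD_apply[OF assms] pD_commute)
  qed (auto simp: tD_invalid)
qed

definition tDs :: "'l idx list \<Rightarrow> 'l tens \<Rightarrow> 'l tens" where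
  "tDs L H = foldr TD L H"

lemma tDs_simps [simp]: "tDs [] H = H" "tDs (e # L) H = TD e (tDs L H)"
  unfolding tDs_def by auto

lemma tDs_append: "tDs (L1 @ L2) H = tDs L1 (tDs L2 H)"
  unfolding tDs_def by simp

lemma admissible_tDs: "admissible S H \<Longrightarrow> admissible S (tDs L H)"
  by (induction L) (auto intro: admissible_tD)

lemma tDs_tD: "admissible S H \<Longrightarrow> tDs L (TD a H) = TD a (tDs L H)"
  by (induction L) (auto simp: tD_commute[OF admissible_tDs])

lemma tDs_perm: "admissible S H \<Longrightarrow> mset L = mset L' \<Longrightarrow> tDs L H = tDs L' H"
proof (induction L arbitrary: L')
  case (Cons a L)
  then obtain L1 L2 where L': "L' = L1 @ a # L2"
    by (metis list.set_intros(1) set_mset_mset split_list)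
  have "tDs L' H = tDs L1 (TD a (tDs L2 H))" unfolding L' tDs_append by simp
  also have "\<dots> = TD a (tDs (L1 @ L2) H)"
    using tDs_tD admissible_tDs[OF Cons.prems(1)] tDs_append by metis
  also have "\<dots> = TD a (tDs L H)"
    using Cons.IH[OF Cons.prems(1), of "L1 @ L2"] Cons.prems(2) L' by simp
  finally show ?case by simp
qed simp

text \<open>Because the \<open>D\<^sub>o\<close> commute, every enumeration of \<open>\<mu>\<close> gives the same \<open>D\<^sup>\<mu>\<close>.\<close>

definition tD_mset :: "'l idx multiset \<Rightarrow> 'l tens \<Rightarrow> 'l tens" where
  "tD_mset \<mu> H = tDs (SOME L. mset L = \<mu>) H"

lemma tD_mset_mset: "admissible S H \<Longrightarrow> tD_mset (mset L) H = tDs L H"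
  unfolding tD_mset_def by (rule tDs_perm) (auto intro: someI)

lemma admissible_tD_mset: "admissible S H \<Longrightarrow> admissible S (tD_mset \<mu> H)"
  unfolding tD_mset_def by (rule admissible_tDs)

lemma tD_mset_empty: "admissible S H \<Longrightarrow> tD_mset {#} H = H"
  using tD_mset_mset[of S H "[]"] by simp

lemma tD_tD_mset: "admissible S H \<Longrightarrow> TD e (tD_mset \<mu> H) = tD_mset (add_mset e \<mu>) H"
  by (metis ex_mset mset.simps(2) tD_mset_mset tDs_simps(2))

lemma tD_eq_0_if_independent:
  assumes "admissible S G" "e \<notin> S" "e \<notin> Ep l"
  shows "TD e G = (\<lambda>\<alpha> x. 0)"
proof (intro ext)
  fix \<alpha> x
  show "TD e G \<alpha> x = 0"
    using assms pD_eq_0_if_independent[of S "G \<alpha>" e] unfolding admissible_def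
    by (cases "valid \<alpha>") (auto simp: tD_valid tD_invalid)
qed

lemma tD_mset_eq_0_if_independent:
  assumes "admissible S H" "e \<in># \<mu>" "e \<notin> S" "e \<notin> Ep l"
  shows "tD_mset \<mu> H = (\<lambda>\<alpha> x. 0)"
proof -
  have "tD_mset \<mu> H = TD e (tD_mset (\<mu> - {#e#}) H)"
    using tD_tD_mset[OF assms(1), of e "\<mu> - {#e#}"] assms(2) by simp
  also have "\<dots> = (\<lambda>\<alpha> x. 0)"
    by (rule tD_eq_0_if_independent[OF admissible_tD_mset[OF assms(1)] assms(3,4)])
  finally show ?thesis .
qed

lemma tDm_eq_tD_mset:
  assumes "admissible S H" "finite {e. m e \<noteq> 0}"
  shows "tDm Ep ks l m H = tD_mset (Abs_multiset m) H"
proof -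
  define es where "es = (SOME es. distinct es \<and> set es = {e. m e \<noteq> 0})"
  have es: "distinct es" "set es = {e. m e \<noteq> 0}"
    unfolding es_def by (metis (mono_tags, lifting) someI_ex assms(2) finite_distinct_list)+
  have "foldr (\<lambda>e G. (TD e ^^ m e) \<circ> G) es id H = tDs (concat (map (\<lambda>e. replicate (m e) e) es)) H"
  proof (induction es)
    case (Cons e es)
    have "(TD e ^^ n) (tDs L H) = tDs (replicate n e @ L) H" for n L
      by (induction n) auto
    with Cons show ?case by (simp add: tDs_append)
  qed simp
  moreover have "mset (concat (map (\<lambda>e. replicate (m e) e) es)) = Abs_multiset m"
  proof (rule multiset_eqI)
    fix e
    have "count (mset (concat (map (\<lambda>e. replicate (m e) e) es))) e = (if e \<in> set es then m e else 0)"
      using es(1) by (induction es) (auto simp: count_eq_zero_iff)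
    then show "count (mset (concat (map (\<lambda>e. replicate (m e) e) es))) e = count (Abs_multiset m) e"
      using es(2) assms(2) by (auto simp: count_Abs_multiset)
  qed
  ultimately show ?thesis
    unfolding tDm_def es_def[symmetric] Let_def using tD_mset_mset[OF assms(1)] by metis
qed

lemma tdi_eq_sum_tD:
  assumes "\<And>\<alpha>. depends_only_on S (H \<alpha>)" "finite T" "S \<subseteq> T" "Ep l \<subseteq> T"
  shows "tdi Ep ks l i H \<alpha> x = (\<Sum>u\<in>T. x (shift_i i u) * TD u H \<alpha> x)"
proof (cases "valid \<alpha>")
  case True
  have "(\<Sum>e\<in>{e \<in> Ep l. 1 \<le> \<alpha> e}. H (\<alpha>(e := \<alpha> e - 1)) x * x (shift_i i e)) =
     (\<Sum>u\<in>T. x (shift_i i u) * (if u \<in> Ep l \<and> 1 \<le> \<alpha> u then H (\<alpha>(u := \<alpha> u - 1)) x else 0))"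
  proof -
    have "{e \<in> Ep l. 1 \<le> \<alpha> e} = {u \<in> T. u \<in> Ep l \<and> 1 \<le> \<alpha> u}" using assms(4) by auto
    then show ?thesis
      by (simp add: sum.inter_filter[OF assms(2)] mult.commute if_distrib cong: if_cong)
  qed
  with True show ?thesis
    unfolding tdi_def dP_eq_sum[OF assms(1-3)] by (simp add: tD_valid distrib_left sum.distrib)
qed (simp add: tdi_def tD_invalid)

definition tmult :: "'l pfun \<Rightarrow> 'l tens \<Rightarrow> 'l tens" where
  "tmult c H = (\<lambda>\<alpha> x. c x * H \<alpha> x)"

lemma admissible_tmult:
  "admissible S H \<Longrightarrow> smooth c \<Longrightarrow> depends_only_on Sc c \<Longrightarrow> admissible (Sc \<union> S) (tmult c H)"
  unfolding admissible_def tmult_def by (auto intro: smooth_mult depends_only_on_mult)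

lemma tD_tmult:
  assumes "admissible S H" "smooth c"
  shows "TD e (tmult c H) \<alpha> x = pD e c x * H \<alpha> x + c x * TD e H \<alpha> x"
proof (cases "valid \<alpha>")
  case True
  have "pdifferentiable e c" "pdifferentiable e (H \<alpha>)"
    using assms smooth_imp_pdifferentiable unfolding admissible_def by blast+
  with True show ?thesis
    by (auto simp add: tD_valid tmult_def pD_mult distrib_left)
qed (use assms in \<open>simp add: admissible_def tD_invalid\<close>)

lemma tdi_tmult:
  assumes "admissible S H" "smooth c" "depends_only_on Sc c" "finite Sc" "finite S" "finite (Ep l)"
  shows "tdi Ep ks l i (tmult c H) \<alpha> x = dP i c x * H \<alpha> x + c x * tdi Ep ks l i H \<alpha> x"
proof -
  let ?T = "Sc \<union> S \<union> Ep l"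
  have "admissible ?T (tmult c H)" "admissible ?T H"
    using admissible_tmult[OF assms(1-3)] assms(1) by (auto elim!: admissible_mono)
  then have "tdi Ep ks l i (tmult c H) \<alpha> x = (\<Sum>u\<in>?T. x (shift_i i u) * TD u (tmult c H) \<alpha> x)"
    "tdi Ep ks l i H \<alpha> x = (\<Sum>u\<in>?T. x (shift_i i u) * TD u H \<alpha> x)"
    using assms(4-6) by (auto intro!: tdi_eq_sum_tD simp: admissible_def)
  moreover have "dP i c x = (\<Sum>u\<in>?T. x (shift_i i u) * pD u c x)"
    using assms(3-6) by (intro dP_eq_sum) auto
  ultimately show ?thesis
    by (simp add: tD_tmult[OF assms(1,2)] distrib_left sum.distrib sum_distrib_left
        sum_distrib_right ac_simps)
qed

definition tsum :: "('a \<Rightarrow> 'l tens) \<Rightarrow> 'a set \<Rightarrow> 'l tens" where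
  "tsum f A = (\<lambda>\<alpha> x. \<Sum>a\<in>A. f a \<alpha> x)"

lemma admissible_tsum:
  assumes "finite A" "\<And>a. a \<in> A \<Longrightarrow> admissible S (f a)"
  shows "admissible S (tsum f A)"
  using assms unfolding admissible_def tsum_def
  by (auto intro!: smooth_sum depends_only_on_sum)

lemma tD_tsum:
  assumes "finite A" "\<And>a. a \<in> A \<Longrightarrow> admissible S (f a)"
  shows "TD e (tsum f A) \<alpha> x = (\<Sum>a\<in>A. TD e (f a) \<alpha> x)"
proof (cases "valid \<alpha>")
  case True
  have "pdifferentiable e (f a \<alpha>)" if "a \<in> A" for a
    using assms(2)[OF that] smooth_imp_pdifferentiable unfolding admissible_def by blast
  with True assms(1) show ?thesis
    unfolding tsum_def by (auto simp add: tD_valid pD_sum sum.distrib)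
qed (simp add: tD_invalid)

lemma tdi_tsum:
  assumes "finite A" "\<And>a. a \<in> A \<Longrightarrow> admissible S (f a)" "finite S" "finite (Ep l)"
  shows "tdi Ep ks l i (tsum f A) \<alpha> x = (\<Sum>a\<in>A. tdi Ep ks l i (f a) \<alpha> x)"
proof -
  let ?T = "S \<union> Ep l"
  have "tdi Ep ks l i (tsum f A) \<alpha> x = (\<Sum>u\<in>?T. x (shift_i i u) * TD u (tsum f A) \<alpha> x)"
    using admissible_tsum[OF assms(1,2)] assms(3,4)
    by (intro tdi_eq_sum_tD) (auto simp: admissible_def)
  also have "\<dots> = (\<Sum>a\<in>A. \<Sum>u\<in>?T. x (shift_i i u) * TD u (f a) \<alpha> x)"
    by (simp add: tD_tsum[OF assms(1,2)] sum_distrib_left sum.swap[of _ ?T])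
  also have "\<dots> = (\<Sum>a\<in>A. tdi Ep ks l i (f a) \<alpha> x)"
    using assms(2-4) by (intro sum.cong refl tdi_eq_sum_tD[symmetric]) (auto simp: admissible_def)
  finally show ?thesis .
qed

end

section \<open>The coefficient monomials\<close>

text \<open>\<open>mcoef \<nu>\<close> is the coefficient \<open>\<Prod>\<^sub>i \<Prod>\<^sub>o (1/m\<^sub>i[o]!) (X\<^bsub>o+q\<^sub>i\<^esub>/q\<^sub>i!)^m\<^sub>i[o]\<close> of the paper,
  written for the multiset \<open>\<nu>\<close> in which the pair \<open>(q\<^sub>i, o)\<close> has multiplicity \<open>m\<^sub>i[o]\<close>.\<close>

definition shifted :: "nat list \<times> 'l idx \<Rightarrow> 'l idx" where
  "shifted p = shift_q (fst p) (snd p)"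

definition coef_factor :: "nat \<Rightarrow> nat list \<times> 'l idx \<Rightarrow> 'l pfun" where
  "coef_factor n p = (\<lambda>x. (1 / fact n) * ((1 / vfact (fst p)) * x (shifted p)) ^ n)"

definition mcoef :: "(nat list \<times> 'l idx) multiset \<Rightarrow> 'l pfun" where
  "mcoef \<nu> = (\<lambda>x. \<Prod>p\<in>set_mset \<nu>. coef_factor (count \<nu> p) p x)"

lemma coef_factor_0 [simp]: "coef_factor 0 p x = 1"
  unfolding coef_factor_def by simp

lemma coef_factor_Suc:
  "coef_factor (Suc n) p x * Suc n = coef_factor n p x * x (shifted p) / vfact (fst p)"
proof -
  have "(1 / fact (Suc n)) * z ^ Suc n * real (Suc n) = (1 / fact n) * z ^ n * z" for z :: real
    by (simp add: field_simps del: of_nat_Suc)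
  then show ?thesis
    unfolding coef_factor_def by simp
qed

lemma mcoef_eq_prod:
  assumes "finite A" "set_mset \<nu> \<subseteq> A"
  shows "mcoef \<nu> x = (\<Prod>p\<in>A. coef_factor (count \<nu> p) p x)"
  unfolding mcoef_def using assms
  by (intro prod.mono_neutral_left) (auto simp: not_in_iff)

lemma mcoef_empty [simp]: "mcoef {#} x = 1"
  unfolding mcoef_def by simp

lemma mcoef_add_mset:
  "mcoef (add_mset p \<nu>) x * count (add_mset p \<nu>) p = mcoef \<nu> x * x (shifted p) / vfact (fst p)"
proof -
  let ?A = "insert p (set_mset \<nu>)"
  let ?R = "\<lambda>\<mu>. \<Prod>q\<in>?A - {p}. coef_factor (count \<mu> q) q x"
  have split: "mcoef \<mu> x = coef_factor (count \<mu> p) p x * ?R \<mu>" if "set_mset \<mu> \<subseteq> ?A" for \<mu>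
    using that by (simp add: mcoef_eq_prod[of ?A] prod.insert_remove)
  have "?R (add_mset p \<nu>) = ?R \<nu>"
    by (intro prod.cong) auto
  then have "mcoef (add_mset p \<nu>) x * count (add_mset p \<nu>) p =
      (coef_factor (Suc (count \<nu> p)) p x * Suc (count \<nu> p)) * ?R \<nu>"
    using split[of "add_mset p \<nu>"] by simp
  also have "\<dots> = mcoef \<nu> x * x (shifted p) / vfact (fst p)"
    unfolding coef_factor_Suc split[of \<nu>, OF subset_insertI] by simp
  finally show ?thesis .
qed

lemma smooth_coef_factor: "smooth (coef_factor n p)"
  unfolding coef_factor_def by (intro smooth_mult smooth_const smooth_power smooth_var)

lemma smooth_mcoef: "smooth (mcoef \<nu>)"
  unfolding mcoef_def by (intro smooth_prod smooth_coef_factor) auto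

lemma depends_only_on_mcoef: "depends_only_on (shifted ` set_mset \<nu>) (mcoef \<nu>)"
  unfolding mcoef_def coef_factor_def
  by (intro depends_only_on_prod) (auto simp: depends_only_on_def)

lemma pD_coef_factor:
  "pD e (coef_factor (Suc n) p) x = (if shifted p = e then coef_factor n p x / vfact (fst p) else 0)"
proof (cases "shifted p = e")
  case True
  define b where "b = 1 / vfact (fst p)"
  have "((\<lambda>t. (1 / fact (Suc n)) * (b * t) ^ Suc n) has_real_derivative
      (1 / fact (Suc n)) * ((1 + of_nat n) * (b * (b * x e) ^ n))) (at (x e))"
    by (intro DERIV_cmult DERIV_power_Suc DERIV_cmult_Id)
  moreover have
    "(1 / fact (Suc n)) * ((1 + of_nat n) * (b * (b * x e) ^ n)) = b * ((1 / fact n) * (b * x e) ^ n)"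
  proof -
    have "fact (Suc n) = (1 + of_nat n) * (fact n :: real)" by simp
    moreover have "(1 + of_nat n :: real) \<noteq> 0" by (metis of_nat_Suc of_nat_eq_0_iff nat.distinct(1))
    ultimately show ?thesis by simp
  qed
  moreover have "(\<lambda>t. coef_factor (Suc n) p (x(e := t))) = (\<lambda>t. (1 / fact (Suc n)) * (b * t) ^ Suc n)"
    unfolding coef_factor_def b_def using True by simp
  ultimately have "pD e (coef_factor (Suc n) p) x = b * ((1 / fact n) * (b * x e) ^ n)"
    unfolding pD_def by (metis DERIV_imp_deriv)
  with True show ?thesis
    unfolding coef_factor_def b_def by simp
next
  case False
  have "depends_only_on {shifted p} (coef_factor (Suc n) p)"
    unfolding coef_factor_def depends_only_on_def by simp
  with False show ?thesis
    using pD_eq_0_if_independent[of "{shifted p}" _ e] by simp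
qed

lemma pD_mcoef:
  "pD e (mcoef \<nu>) x =
     (\<Sum>p\<in>set_mset \<nu>. if shifted p = e then mcoef (\<nu> - {#p#}) x / vfact (fst p) else 0)"
proof -
  let ?A = "set_mset \<nu>"
  have "pD e (mcoef \<nu>) x =
      (\<Sum>p\<in>?A. pD e (coef_factor (count \<nu> p) p) x * (\<Prod>q\<in>?A - {p}. coef_factor (count \<nu> q) q x))"
    unfolding mcoef_def by (rule pD_prod) (auto intro: smooth_coef_factor)
  also have "\<dots> = (\<Sum>p\<in>?A. if shifted p = e then mcoef (\<nu> - {#p#}) x / vfact (fst p) else 0)"
  proof (rule sum.cong[OF refl])
    fix p assume p: "p \<in> ?A"
    then have count: "count \<nu> p = Suc (count (\<nu> - {#p#}) p)"
      by (simp add: Suc_diff_1)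
    have "mcoef (\<nu> - {#p#}) x = (\<Prod>q\<in>?A. coef_factor (count (\<nu> - {#p#}) q) q x)"
      by (rule mcoef_eq_prod) (auto dest: in_diffD)
    also have "\<dots> = coef_factor (count (\<nu> - {#p#}) p) p x *
        (\<Prod>q\<in>?A - {p}. coef_factor (count (\<nu> - {#p#}) q) q x)"
      using p by (subst prod.remove[of _ p]) auto
    also have "(\<Prod>q\<in>?A - {p}. coef_factor (count (\<nu> - {#p#}) q) q x) =
        (\<Prod>q\<in>?A - {p}. coef_factor (count \<nu> q) q x)"
      by (intro prod.cong) auto
    finally show "pD e (coef_factor (count \<nu> p) p) x * (\<Prod>q\<in>?A - {p}. coef_factor (count \<nu> q) q x) =
       (if shifted p = e then mcoef (\<nu> - {#p#}) x / vfact (fst p) else 0)"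
      unfolding count pD_coef_factor by simp
  qed
  finally show ?thesis .
qed

lemma dP_mcoef:
  "dP i (mcoef \<nu>) x =
     (\<Sum>p\<in>set_mset \<nu>. x (shift_i i (shifted p)) * mcoef (\<nu> - {#p#}) x / vfact (fst p))"
proof -
  let ?T = "shifted ` set_mset \<nu>"
  have "dP i (mcoef \<nu>) x = (\<Sum>u\<in>?T. \<Sum>p\<in>set_mset \<nu>.
      if shifted p = u then x (shift_i i u) * mcoef (\<nu> - {#p#}) x / vfact (fst p) else 0)"
    by (simp add: dP_eq_sum[OF depends_only_on_mcoef finite_imageI[OF finite_set_mset] subset_refl]
        pD_mcoef sum_distrib_left if_distrib cong: if_cong)
  also have "\<dots> = (\<Sum>p\<in>set_mset \<nu>. x (shift_i i (shifted p)) * mcoef (\<nu> - {#p#}) x / vfact (fst p))"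
    by (subst sum.swap) (simp add: sum.delta')
  finally show ?thesis .
qed

definition vinc :: "nat \<Rightarrow> nat list \<Rightarrow> nat list" where
  "vinc i q = q[i := q ! i + 1]"

definition vdec :: "nat \<Rightarrow> nat list \<Rightarrow> nat list" where
  "vdec i q = q[i := q ! i - 1]"

definition unit_vec :: "nat \<Rightarrow> nat \<Rightarrow> nat list" where
  "unit_vec d i = (replicate (d + 1) 0)[i := 1]"

lemma length_vinc [simp]: "length (vinc i q) = length q"
  unfolding vinc_def by simp

lemma length_vdec [simp]: "length (vdec i q) = length q"
  unfolding vdec_def by simp

lemma length_unit_vec [simp]: "length (unit_vec d i) = d + 1"
  unfolding unit_vec_def by (simp del: replicate.simps)

lemma vinc_nth: "j < length q \<Longrightarrow> vinc i q ! j = (if j = i then q ! i + 1 else q ! j)"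
  unfolding vinc_def by auto

lemma vdec_nth: "j < length q \<Longrightarrow> vdec i q ! j = (if j = i then q ! i - 1 else q ! j)"
  unfolding vdec_def by auto

lemma unit_vec_nth: "j < d + 1 \<Longrightarrow> unit_vec d i ! j = (if j = i then 1 else 0)"
  unfolding unit_vec_def by (auto simp: nth_list_update simp del: replicate.simps)

lemma vinc_vdec: "1 \<le> q ! i \<Longrightarrow> vinc i (vdec i q) = q"
  unfolding vinc_def vdec_def by (cases "i < length q") (auto simp: list_update_beyond)

lemma vdec_vinc: "vdec i (vinc i q) = q"
  unfolding vinc_def vdec_def by (cases "i < length q") (auto simp: list_update_beyond)

lemma vdec_unit_vec: "i \<le> d \<Longrightarrow> vdec i (unit_vec d i) = replicate (d + 1) 0"
  by (rule nth_equalityI) (auto simp: vdec_nth unit_vec_nth simp del: replicate.simps)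

lemma vfact_replicate_0: "vfact (replicate n 0) = 1"
  unfolding vfact_def by simp

lemma vfact_unit_vec: "vfact (unit_vec d i) = 1"
  unfolding vfact_def by (rule prod.neutral) (auto simp: unit_vec_nth)

lemma vfact_vinc:
  assumes "i < length q"
  shows "vfact (vinc i q) = real (q ! i + 1) * vfact q"
proof -
  have "vfact (vinc i q) = fact (q ! i + 1) * (\<Prod>j\<in>{..<length q} - {i}. fact (q ! j))"
    unfolding vfact_def vinc_def using assms
    by (subst prod.remove[of _ i]) (auto intro!: prod.cong)
  moreover have "vfact q = fact (q ! i) * (\<Prod>j\<in>{..<length q} - {i}. fact (q ! j))"
    unfolding vfact_def using assms by (subst prod.remove[of _ i]) auto
  ultimately show ?thesis by simp
qed

lemma shift_i_shift_q:
  "length (snd u) = length q \<Longrightarrow> i < length q \<Longrightarrow> shift_i i (shift_q q u) = shift_q (vinc i q) u"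
  unfolding shift_i_def shift_q_def vinc_def vadd_def
  by (auto intro!: nth_equalityI simp: nth_list_update)

lemma shift_q_unit_vec:
  "length (snd u) = d + 1 \<Longrightarrow> i \<le> d \<Longrightarrow> shift_q (unit_vec d i) u = shift_i i u"
  unfolding shift_q_def shift_i_def vadd_def
  by (auto intro!: nth_equalityI simp: unit_vec_nth nth_list_update)

definition weight :: "(nat list \<times> 'l idx) multiset \<Rightarrow> nat \<Rightarrow> nat" where
  "weight \<nu> j = (\<Sum>p\<in>#\<nu>. fst p ! j)"

lemma weight_add_mset [simp]: "weight (add_mset p \<nu>) j = fst p ! j + weight \<nu> j"
  unfolding weight_def by simp

lemma weight_ge: "p \<in># \<nu> \<Longrightarrow> fst p ! j \<le> weight \<nu> j"
  by (metis insert_DiffM le_add1 weight_add_mset)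

lemma weight_remove: "p \<in># \<nu> \<Longrightarrow> weight (\<nu> - {#p#}) j = weight \<nu> j - fst p ! j"
  by (metis add_diff_cancel_left' insert_DiffM weight_add_mset)

lemma sum_mset_eq_sum_count:
  "(\<Sum>p\<in>#\<nu>. f p) = (\<Sum>p\<in>set_mset \<nu>. of_nat (count \<nu> p) * (f p :: 'b :: comm_semiring_1))"
proof (induction \<nu>)
  case (add x \<nu>)
  have "(\<Sum>p\<in>insert x (set_mset \<nu>). of_nat (count (add_mset x \<nu>) p) * f p) =
      (\<Sum>p\<in>insert x (set_mset \<nu>). of_nat (count \<nu> p) * f p + (if p = x then f p else 0))"
    by (intro sum.cong) (auto simp: algebra_simps)
  also have "\<dots> = (\<Sum>p\<in>set_mset \<nu>. of_nat (count \<nu> p) * f p) + f x"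
    by (simp add: sum.distrib sum.insert_if not_in_iff)
  finally show ?case using add by (simp add: add.commute)
qed simp

section \<open>The expansion of \<open>\<partial>\<^sup>k\<close>\<close>

text \<open>\<open>E0\<close> is a finite set of indices containing \<open>\<E>\<^sub>+(l)\<close> and all indeterminates on which the
  coefficients of \<open>Fh\<close> depend; only the \<open>D\<^sub>o\<close> with \<open>o \<in> E0\<close> act nontrivially on \<open>Fh\<close>.\<close>

locale tensor_expansion = tensor_ops Ep ks l for Ep :: "'l \<Rightarrow> 'l idx set" and ks :: nat and l :: 'l +
  fixes d :: nat and E0 S0 :: "'l idx set" and Fh :: "'l tens"
  assumes finite_E0: "finite E0" and S0_subset: "S0 \<subseteq> E0" and Ep_subset: "Ep l \<subseteq> E0"
    and E0_subset: "E0 \<subseteq> Eset d" and admissible_Fh: "admissible S0 Fh"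
begin

definition nonzero_vecs :: "nat list set" where
  "nonzero_vecs = {q. length q = d + 1 \<and> q \<noteq> replicate (d + 1) 0}"

definition msets_of_weight :: "nat list \<Rightarrow> (nat list \<times> 'l idx) multiset set" where
  "msets_of_weight k = {\<nu>. set_mset \<nu> \<subseteq> nonzero_vecs \<times> E0 \<and> (\<forall>j\<le>d. weight \<nu> j = k ! j)}"

definition D_mset :: "(nat list \<times> 'l idx) multiset \<Rightarrow> 'l tens" where
  "D_mset \<nu> = tD_mset (image_mset snd \<nu>) Fh"

definition expansion :: "nat list \<Rightarrow> 'l tens" where
  "expansion k = (\<lambda>\<alpha> x. vfact k * (\<Sum>\<nu>\<in>msets_of_weight k. mcoef \<nu> x * D_mset \<nu> \<alpha> x))"

lemma finite_S0: "finite S0"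
  using finite_E0 S0_subset by (rule finite_subset[rotated])

lemma finite_Ep: "finite (Ep l)"
  using finite_E0 Ep_subset by (rule finite_subset[rotated])

lemma length_snd_E0: "u \<in> E0 \<Longrightarrow> length (snd u) = d + 1"
  using E0_subset unfolding Eset_def by auto

lemma admissible_D_mset: "admissible S0 (D_mset \<nu>)"
  unfolding D_mset_def by (rule admissible_tD_mset[OF admissible_Fh])

lemma D_mset_add_mset: "TD u (D_mset \<nu>) = D_mset (add_mset (q, u) \<nu>)"
  unfolding D_mset_def using tD_tD_mset[OF admissible_Fh] by simp

lemma D_mset_replace: "p \<in># \<nu> \<Longrightarrow> D_mset (add_mset (q, snd p) (\<nu> - {#p#})) = D_mset \<nu>"
  unfolding D_mset_def by (metis image_mset_add_mset insert_DiffM snd_conv)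

lemma length_nonzero_vecs: "q \<in> nonzero_vecs \<Longrightarrow> length q = d + 1"
  unfolding nonzero_vecs_def by auto

lemma nonzero_vecsE:
  assumes "q \<in> nonzero_vecs"
  obtains j where "j \<le> d" "q ! j \<noteq> 0"
proof -
  have "\<not> (\<forall>j<d + 1. q ! j = 0)"
    using assms unfolding nonzero_vecs_def by (auto intro!: nth_equalityI simp del: replicate.simps)
  with that show thesis by (metis Suc_eq_plus1 less_Suc_eq_le)
qed

lemma nonzero_vecsI: "length q = d + 1 \<Longrightarrow> j \<le> d \<Longrightarrow> q ! j \<noteq> 0 \<Longrightarrow> q \<in> nonzero_vecs"
  unfolding nonzero_vecs_def by (auto simp del: replicate.simps)

lemma vinc_in_nonzero_vecs: "q \<in> nonzero_vecs \<Longrightarrow> i \<le> d \<Longrightarrow> vinc i q \<in> nonzero_vecs"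
  by (rule nonzero_vecsI[of _ i]) (auto simp: length_nonzero_vecs vinc_nth)

lemma unit_vec_in_nonzero_vecs: "i \<le> d \<Longrightarrow> unit_vec d i \<in> nonzero_vecs"
  by (rule nonzero_vecsI[of _ i]) (auto simp: unit_vec_nth)

lemma vinc_neq_unit_vec:
  assumes "q \<in> nonzero_vecs" "i \<le> d"
  shows "vinc i q \<noteq> unit_vec d i"
proof
  assume "vinc i q = unit_vec d i"
  then have "q = replicate (d + 1) 0" using vdec_vinc[of i q] vdec_unit_vec[OF assms(2)] by simp
  with assms(1) show False unfolding nonzero_vecs_def by simp
qed

lemma vdec_in_nonzero_vecs:
  assumes "q \<in> nonzero_vecs" "i \<le> d" "q ! i \<noteq> 0" "q \<noteq> unit_vec d i"
  shows "vdec i q \<in> nonzero_vecs"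
proof (rule ccontr)
  assume "vdec i q \<notin> nonzero_vecs"
  then have "vdec i q = replicate (d + 1) 0"
    using assms(1) unfolding nonzero_vecs_def by simp
  have "q = unit_vec d i"
  proof (rule nth_equalityI)
    fix j assume "j < length q"
    moreover have "vdec i q ! j = 0"
      using \<open>vdec i q = replicate (d + 1) 0\<close> \<open>j < length q\<close> length_nonzero_vecs[OF assms(1)]
      by (simp del: replicate.simps)
    ultimately show "q ! j = unit_vec d i ! j"
      using assms(3) length_nonzero_vecs[OF assms(1)]
      by (auto simp: vdec_nth unit_vec_nth split: if_splits)
  qed (simp add: length_nonzero_vecs[OF assms(1)])
  with assms(4) show False ..
qed

lemma sum_weight:
  "(\<Sum>j\<le>d. weight \<nu> j) = (\<Sum>p\<in>#\<nu>. \<Sum>j\<le>d. fst p ! j)"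
  unfolding weight_def by (induction \<nu>) (simp_all add: sum.distrib)

lemma size_le_sum_list_weight:
  assumes "\<nu> \<in> msets_of_weight k" "length k = d + 1"
  shows "size \<nu> \<le> sum_list k"
proof -
  have "size \<nu> = (\<Sum>p\<in>#\<nu>. (1::nat))" by simp
  also have "\<dots> \<le> (\<Sum>p\<in>#\<nu>. \<Sum>j\<le>d. fst p ! j)"
  proof (rule sum_mset_mono)
    fix p assume "p \<in># \<nu>"
    then have "fst p \<in> nonzero_vecs" using assms(1) unfolding msets_of_weight_def by auto
    then obtain j where j: "j \<le> d" "fst p ! j \<noteq> 0" by (rule nonzero_vecsE)
    then have "fst p ! j \<le> (\<Sum>j\<le>d. fst p ! j)" by (intro member_le_sum) auto
    with j show "1 \<le> (\<Sum>j\<le>d. fst p ! j)" by linarith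
  qed
  also have "\<dots> = (\<Sum>j\<le>d. k ! j)"
    using assms(1) unfolding sum_weight[symmetric] msets_of_weight_def by simp
  also have "\<dots> = sum_list k"
    unfolding sum_list_sum_nth assms(2) by (rule sum.cong) auto
  finally show ?thesis .
qed

lemma msets_of_weight_subset_lists:
  assumes "\<nu> \<in> msets_of_weight k" "length k = d + 1" "p \<in># \<nu>"
  shows "fst p \<in> {q. set q \<subseteq> {0..sum_list k} \<and> length q = d + 1}"
proof -
  have len: "length (fst p) = d + 1"
    using assms(1,3) length_nonzero_vecs unfolding msets_of_weight_def by auto
  have "fst p ! j \<le> sum_list k" if "j < d + 1" for j
  proof -
    have "weight \<nu> j = k ! j" using assms(1) that unfolding msets_of_weight_def by simp
    moreover have "k ! j \<le> sum_list k" using that assms(2) by (intro elem_le_sum_list) simp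
    ultimately show ?thesis using weight_ge[OF assms(3), of j] by linarith
  qed
  with len show ?thesis by (auto simp: in_set_conv_nth)
qed

lemma finite_msets_of_weight:
  assumes "length k = d + 1"
  shows "finite (msets_of_weight k)"
proof -
  define QB where "QB = {q. set q \<subseteq> {0..sum_list k} \<and> length q = d + 1}"
  have "msets_of_weight k \<subseteq> (\<Union>n\<le>sum_list k. multisets_of_size (QB \<times> E0) n)"
  proof
    fix \<nu> assume \<nu>: "\<nu> \<in> msets_of_weight k"
    have "set_mset \<nu> \<subseteq> QB \<times> E0"
    proof
      fix p assume "p \<in># \<nu>"
      then have "fst p \<in> QB" "snd p \<in> E0"
        using msets_of_weight_subset_lists[OF \<nu> assms] \<nu> unfolding QB_def msets_of_weight_def by auto
      then show "p \<in> QB \<times> E0" by (simp add: mem_Times_iff)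
    qed
    with size_le_sum_list_weight[OF \<nu> assms]
    show "\<nu> \<in> (\<Union>n\<le>sum_list k. multisets_of_size (QB \<times> E0) n)"
      unfolding multisets_of_size_def by blast
  qed
  moreover have "finite QB"
    unfolding QB_def by (rule finite_lists_length_eq) simp
  then have "finite (\<Union>n\<le>sum_list k. multisets_of_size (QB \<times> E0) n)"
    using finite_E0 by (intro finite_UN_I finite_atMost finite_multisets_of_size finite_cartesian_product)
  ultimately show ?thesis by (rule finite_subset)
qed

lemma msets_of_weight_zero: "msets_of_weight (replicate (d + 1) 0) = {{#}}"
proof -
  have "\<nu> = {#}" if "\<nu> \<in> msets_of_weight (replicate (d + 1) 0)" for \<nu>
  proof (rule ccontr)
    assume "\<nu> \<noteq> {#}"
    then obtain p where p: "p \<in># \<nu>" by blast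
    then have "fst p \<in> nonzero_vecs" using that unfolding msets_of_weight_def by auto
    then obtain j where j: "j \<le> d" "fst p ! j \<noteq> 0" by (rule nonzero_vecsE)
    have "weight \<nu> j = 0" using that j unfolding msets_of_weight_def by (auto simp del: replicate.simps)
    then show False using weight_ge[OF p, of j] j by simp
  qed
  moreover have "{#} \<in> msets_of_weight (replicate (d + 1) 0)"
    unfolding msets_of_weight_def weight_def by (auto simp del: replicate.simps)
  ultimately show ?thesis by blast
qed

lemma expansion_zero: "expansion (replicate (d + 1) 0) = Fh"
  unfolding expansion_def msets_of_weight_zero D_mset_def
  by (simp add: vfact_replicate_0 tD_mset_empty[OF admissible_Fh] del: replicate.simps)

text \<open>Applying \<open>\<partial>\<^sub>i\<close> to the term of \<open>\<nu>\<close> either raises the \<open>q\<close> of one pair \<open>(q, o) \<in> \<nu>\<close> to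
  \<open>q + e\<^sub>i\<close> (from differentiating the coefficient) or adds a new pair \<open>(e\<^sub>i, o)\<close> (from the
  derivations \<open>D\<^sub>o\<close>). Conversely, a multiset \<open>\<nu>'\<close> of weight \<open>k + e\<^sub>i\<close> arises once from each of its
  pairs \<open>p\<close> with \<open>(fst p)\<^sub>i \<noteq> 0\<close>, counted with multiplicity; these contributions add up to
  \<open>k\<^sub>i + 1\<close>, which is exactly the ratio of \<open>(k + e\<^sub>i)!\<close> and \<open>k!\<close>.\<close>

definition raise :: "nat \<Rightarrow> (nat list \<times> 'l idx) multiset \<times> (nat list \<times> 'l idx) \<Rightarrow>
    (nat list \<times> 'l idx) multiset \<times> (nat list \<times> 'l idx)" where
  "raise i = (\<lambda>(\<nu>, p). (add_mset (vinc i (fst p), snd p) (\<nu> - {#p#}), (vinc i (fst p), snd p)))"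

definition lower :: "nat \<Rightarrow> (nat list \<times> 'l idx) multiset \<times> (nat list \<times> 'l idx) \<Rightarrow>
    (nat list \<times> 'l idx) multiset \<times> (nat list \<times> 'l idx)" where
  "lower i = (\<lambda>(\<nu>, p). (add_mset (vdec i (fst p), snd p) (\<nu> - {#p#}), (vdec i (fst p), snd p)))"

definition add_unit :: "nat \<Rightarrow> (nat list \<times> 'l idx) multiset \<times> 'l idx \<Rightarrow>
    (nat list \<times> 'l idx) multiset \<times> (nat list \<times> 'l idx)" where
  "add_unit i = (\<lambda>(\<nu>, u). (add_mset (unit_vec d i, u) \<nu>, (unit_vec d i, u)))"

definition mterm ::
    "nat \<Rightarrow> 'l mon \<Rightarrow> 'l asg \<Rightarrow> (nat list \<times> 'l idx) multiset \<times> (nat list \<times> 'l idx) \<Rightarrow> real"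
  where "mterm i \<alpha> x = (\<lambda>(\<nu>, p). real (count \<nu> p) * real (fst p ! i) * mcoef \<nu> x * D_mset \<nu> \<alpha> x)"

definition raised_pairs :: "nat \<Rightarrow> nat list \<Rightarrow> ((nat list \<times> 'l idx) multiset \<times> (nat list \<times> 'l idx)) set"
  where "raised_pairs i k =
    {(\<nu>, p) \<in> Sigma (msets_of_weight k) set_mset. fst p ! i \<noteq> 0 \<and> fst p \<noteq> unit_vec d i}"

definition unit_pairs :: "nat \<Rightarrow> nat list \<Rightarrow> ((nat list \<times> 'l idx) multiset \<times> (nat list \<times> 'l idx)) set"
  where "unit_pairs i k = {(\<nu>, p) \<in> Sigma (msets_of_weight k) set_mset. fst p = unit_vec d i}"

lemma raise_in_raised_pairs:
  assumes "\<nu> \<in> msets_of_weight k" "p \<in># \<nu>" "i \<le> d" "length k = d + 1"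
  shows "raise i (\<nu>, p) \<in> raised_pairs i (vinc i k)"
proof -
  have q: "fst p \<in> nonzero_vecs" "snd p \<in> E0" using assms(1,2) unfolding msets_of_weight_def by auto
  have "weight (add_mset (vinc i (fst p), snd p) (\<nu> - {#p#})) j = vinc i k ! j" if "j \<le> d" for j
    using assms(1,4) that weight_ge[OF assms(2), of j] length_nonzero_vecs[OF q(1)]
    unfolding msets_of_weight_def by (auto simp: weight_remove[OF assms(2)] vinc_nth)
  then have "add_mset (vinc i (fst p), snd p) (\<nu> - {#p#}) \<in> msets_of_weight (vinc i k)"
    using assms(1) q vinc_in_nonzero_vecs[OF q(1) assms(3)]
    unfolding msets_of_weight_def by (auto dest: in_diffD)
  then show ?thesis
    using vinc_neq_unit_vec[OF q(1) assms(3)] assms(3) length_nonzero_vecs[OF q(1)]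
    by (simp add: raise_def raised_pairs_def vinc_nth)
qed

lemma lower_in_msets_of_weight:
  assumes "(\<nu>, p) \<in> raised_pairs i (vinc i k)" "i \<le> d" "length k = d + 1"
  shows "lower i (\<nu>, p) \<in> Sigma (msets_of_weight k) set_mset"
proof -
  have \<nu>: "\<nu> \<in> msets_of_weight (vinc i k)" and p: "p \<in># \<nu>"
    and pi: "fst p ! i \<noteq> 0" "fst p \<noteq> unit_vec d i"
    using assms(1) unfolding raised_pairs_def by auto
  then have q: "fst p \<in> nonzero_vecs" "snd p \<in> E0" unfolding msets_of_weight_def by auto
  have "weight (add_mset (vdec i (fst p), snd p) (\<nu> - {#p#})) j = k ! j" if "j \<le> d" for j
    using \<nu> that weight_ge[OF p, of j] pi(1) assms(3) length_nonzero_vecs[OF q(1)]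
    unfolding msets_of_weight_def by (auto simp: weight_remove[OF p] vinc_nth vdec_nth)
  then have "add_mset (vdec i (fst p), snd p) (\<nu> - {#p#}) \<in> msets_of_weight k"
    using \<nu> q vdec_in_nonzero_vecs[OF q(1) assms(2) pi] unfolding msets_of_weight_def
    by (auto dest: in_diffD)
  then show ?thesis
    by (simp add: lower_def)
qed

lemma bij_betw_raise:
  assumes "i \<le> d" "length k = d + 1"
  shows "bij_betw (raise i) (Sigma (msets_of_weight k) set_mset) (raised_pairs i (vinc i k))"
  by (rule bij_betw_byWitness[where f' = "lower i"])
    (use raise_in_raised_pairs[OF _ _ assms] lower_in_msets_of_weight[OF _ assms] in
      \<open>auto simp: raise_def lower_def raised_pairs_def vdec_vinc vinc_vdec\<close>)

lemma bij_betw_add_unit: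
  assumes "i \<le> d" "length k = d + 1"
  shows "bij_betw (add_unit i) (msets_of_weight k \<times> E0) (unit_pairs i (vinc i k))"
proof -
  have "\<nu> - {#p#} \<in> msets_of_weight k" "snd p \<in> E0"
    if "(\<nu>, p) \<in> unit_pairs i (vinc i k)" for \<nu> p
  proof -
    have \<nu>: "\<nu> \<in> msets_of_weight (vinc i k)" and p: "p \<in># \<nu>" "fst p = unit_vec d i"
      using that unfolding unit_pairs_def by auto
    have "weight (\<nu> - {#p#}) j = k ! j" if "j \<le> d" for j
      using \<nu> that assms(2) p unfolding msets_of_weight_def
      by (auto simp: weight_remove vinc_nth unit_vec_nth)
    with \<nu> p show "\<nu> - {#p#} \<in> msets_of_weight k" "snd p \<in> E0"
      unfolding msets_of_weight_def by (auto dest: in_diffD)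
  qed
  moreover have "add_unit i z \<in> unit_pairs i (vinc i k)" if "z \<in> msets_of_weight k \<times> E0" for z
    using that assms unit_vec_in_nonzero_vecs[OF assms(1)]
    by (auto simp: add_unit_def unit_pairs_def msets_of_weight_def unit_vec_nth vinc_nth)
  ultimately show ?thesis
    by (intro bij_betw_byWitness[where f' = "\<lambda>(\<nu>, p). (\<nu> - {#p#}, snd p)"])
      (auto simp: add_unit_def unit_pairs_def)
qed

lemma mterm_apply:
  "mterm i \<alpha> x (\<nu>, p) = real (count \<nu> p) * real (fst p ! i) * mcoef \<nu> x * D_mset \<nu> \<alpha> x"
  by (simp add: mterm_def)

lemma mterm_raise:
  assumes "\<nu> \<in> msets_of_weight k" "p \<in># \<nu>" "i \<le> d"
  shows "x (shift_i i (shifted p)) * mcoef (\<nu> - {#p#}) x / vfact (fst p) * D_mset \<nu> \<alpha> x =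
    mterm i \<alpha> x (raise i (\<nu>, p))"
proof -
  have q: "fst p \<in> nonzero_vecs" "snd p \<in> E0" using assms(1,2) unfolding msets_of_weight_def by auto
  have len: "length (fst p) = d + 1" "length (snd (snd p)) = d + 1"
    using length_nonzero_vecs[OF q(1)] length_snd_E0[OF q(2)] by auto
  define p' where "p' = (vinc i (fst p), snd p)"
  define \<nu>' where "\<nu>' = add_mset p' (\<nu> - {#p#})"
  have coef: "mcoef \<nu>' x * count \<nu>' p' =
      mcoef (\<nu> - {#p#}) x * x (shift_i i (shifted p)) / (real (fst p ! i + 1) * vfact (fst p))"
    using mcoef_add_mset[of p' "\<nu> - {#p#}" x] len assms(3)
    by (simp add: \<nu>'_def p'_def shifted_def shift_i_shift_q vfact_vinc)
  have "mterm i \<alpha> x (raise i (\<nu>, p)) =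
      real (count \<nu>' p') * real (fst p' ! i) * mcoef \<nu>' x * D_mset \<nu> \<alpha> x"
    unfolding raise_def case_prod_conv mterm_apply \<nu>'_def p'_def D_mset_replace[OF assms(2)] ..
  also have "\<dots> = real (fst p ! i + 1) * (mcoef \<nu>' x * count \<nu>' p') * D_mset \<nu> \<alpha> x"
    using len assms(3) by (simp add: p'_def vinc_nth)
  also have "\<dots> = x (shift_i i (shifted p)) * mcoef (\<nu> - {#p#}) x / vfact (fst p) * D_mset \<nu> \<alpha> x"
    unfolding coef by simp
  finally show ?thesis ..
qed

lemma mterm_add_unit:
  assumes "u \<in> E0" "i \<le> d"
  shows "mcoef \<nu> x * x (shift_i i u) * TD u (D_mset \<nu>) \<alpha> x = mterm i \<alpha> x (add_unit i (\<nu>, u))"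
proof -
  define \<nu>' where "\<nu>' = add_mset (unit_vec d i, u) \<nu>"
  have "mterm i \<alpha> x (add_unit i (\<nu>, u)) =
      (mcoef \<nu>' x * count \<nu>' (unit_vec d i, u)) * D_mset \<nu>' \<alpha> x"
    unfolding add_unit_def case_prod_conv mterm_apply \<nu>'_def using assms(2) by (simp add: unit_vec_nth)
  also have "\<dots> = mcoef \<nu> x * x (shift_i i u) * TD u (D_mset \<nu>) \<alpha> x"
    unfolding \<nu>'_def mcoef_add_mset D_mset_add_mset[symmetric]
    using shift_q_unit_vec[OF length_snd_E0[OF assms(1)] assms(2)]
    by (simp add: shifted_def vfact_unit_vec)
  finally show ?thesis ..
qed

lemma tdi_expansion_term:
  assumes "\<nu> \<in> msets_of_weight k" "i \<le> d"
  shows "tdi Ep ks l i (tmult (\<lambda>x. vfact k * mcoef \<nu> x) (D_mset \<nu>)) \<alpha> x =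
    vfact k * ((\<Sum>p\<in>set_mset \<nu>. mterm i \<alpha> x (raise i (\<nu>, p))) +
      (\<Sum>u\<in>E0. mterm i \<alpha> x (add_unit i (\<nu>, u))))"
proof -
  have dep: "depends_only_on (shifted ` set_mset \<nu>) (\<lambda>x. vfact k * mcoef \<nu> x)"
    by (rule depends_only_on_cmult[OF depends_only_on_mcoef])
  have "tdi Ep ks l i (D_mset \<nu>) \<alpha> x = (\<Sum>u\<in>E0. x (shift_i i u) * TD u (D_mset \<nu>) \<alpha> x)"
    using admissible_D_mset finite_E0 S0_subset Ep_subset
    by (intro tdi_eq_sum_tD) (auto simp: admissible_def)
  then have "tdi Ep ks l i (tmult (\<lambda>x. vfact k * mcoef \<nu> x) (D_mset \<nu>)) \<alpha> x =
      vfact k * ((\<Sum>p\<in>set_mset \<nu>. x (shift_i i (shifted p)) * mcoef (\<nu> - {#p#}) x / vfact (fst p)) *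
        D_mset \<nu> \<alpha> x + mcoef \<nu> x * (\<Sum>u\<in>E0. x (shift_i i u) * TD u (D_mset \<nu>) \<alpha> x))"
    using tdi_tmult[OF admissible_D_mset _ dep finite_imageI[OF finite_set_mset] finite_S0 finite_Ep]
      dP_cmult[OF smooth_mcoef depends_only_on_mcoef, of \<nu> i "vfact k" x]
    by (simp add: smooth_mult smooth_const smooth_mcoef dP_mcoef distrib_left)
  moreover have
    "(\<Sum>p\<in>set_mset \<nu>. x (shift_i i (shifted p)) * mcoef (\<nu> - {#p#}) x / vfact (fst p)) * D_mset \<nu> \<alpha> x =
      (\<Sum>p\<in>set_mset \<nu>. mterm i \<alpha> x (raise i (\<nu>, p)))"
    unfolding sum_distrib_right by (intro sum.cong refl mterm_raise[OF assms(1) _ assms(2)]) simp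
  moreover have "mcoef \<nu> x * (\<Sum>u\<in>E0. x (shift_i i u) * TD u (D_mset \<nu>) \<alpha> x) =
      (\<Sum>u\<in>E0. mterm i \<alpha> x (add_unit i (\<nu>, u)))"
    unfolding sum_distrib_left
    by (intro sum.cong refl) (simp add: mterm_add_unit[OF _ assms(2), symmetric] mult.assoc)
  ultimately show ?thesis by simp
qed

lemma tdi_expansion_eq_sum:
  assumes "i \<le> d" "length k = d + 1"
  shows "tdi Ep ks l i (expansion k) \<alpha> x =
    vfact k * ((\<Sum>z\<in>raised_pairs i (vinc i k). mterm i \<alpha> x z) +
      (\<Sum>z\<in>unit_pairs i (vinc i k). mterm i \<alpha> x z))"
proof -
  let ?N = "msets_of_weight k"
  let ?H = "\<lambda>\<nu>. tmult (\<lambda>x. vfact k * mcoef \<nu> x) (D_mset \<nu>)"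
  let ?S = "shifted ` (\<Union>\<nu>\<in>?N. set_mset \<nu>) \<union> S0"
  have fin: "finite ?N" "finite ?S"
    using finite_msets_of_weight[OF assms(2)] finite_S0 by auto
  have "admissible (shifted ` set_mset \<nu> \<union> S0) (?H \<nu>)" for \<nu>
    by (intro admissible_tmult admissible_D_mset smooth_mult smooth_const smooth_mcoef
        depends_only_on_cmult depends_only_on_mcoef)
  then have adm: "admissible ?S (?H \<nu>)" if "\<nu> \<in> ?N" for \<nu>
    by (rule admissible_mono) (use that in auto)
  have "expansion k = tsum ?H ?N"
    unfolding expansion_def tsum_def tmult_def by (simp add: sum_distrib_left ac_simps)
  then have "tdi Ep ks l i (expansion k) \<alpha> x = (\<Sum>\<nu>\<in>?N. tdi Ep ks l i (?H \<nu>) \<alpha> x)"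
    using tdi_tsum[OF fin(1) adm fin(2) finite_Ep] by simp
  also have "\<dots> = vfact k * ((\<Sum>\<nu>\<in>?N. \<Sum>p\<in>set_mset \<nu>. mterm i \<alpha> x (raise i (\<nu>, p))) +
      (\<Sum>\<nu>\<in>?N. \<Sum>u\<in>E0. mterm i \<alpha> x (add_unit i (\<nu>, u))))"
    by (simp add: tdi_expansion_term assms(1) sum.distrib sum_distrib_left distrib_left)
  also have "\<dots> = vfact k * ((\<Sum>z\<in>Sigma ?N set_mset. mterm i \<alpha> x (raise i z)) +
      (\<Sum>z\<in>?N \<times> E0. mterm i \<alpha> x (add_unit i z)))"
    using fin(1) finite_E0 by (simp add: sum.Sigma sum.cartesian_product split_def)
  also have "\<dots> = vfact k * ((\<Sum>z\<in>raised_pairs i (vinc i k). mterm i \<alpha> x z) +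
      (\<Sum>z\<in>unit_pairs i (vinc i k). mterm i \<alpha> x z))"
    using sum.reindex_bij_betw[OF bij_betw_raise[OF assms], of "mterm i \<alpha> x"]
      sum.reindex_bij_betw[OF bij_betw_add_unit[OF assms], of "mterm i \<alpha> x"] by simp
  finally show ?thesis .
qed

lemma expansion_vinc_eq_sum:
  assumes "i \<le> d" "length k = d + 1"
  shows "expansion (vinc i k) \<alpha> x =
    vfact k * (\<Sum>z\<in>Sigma (msets_of_weight (vinc i k)) set_mset. mterm i \<alpha> x z)"
proof -
  have "real (k ! i + 1) = (\<Sum>p\<in>set_mset \<nu>. real (count \<nu> p) * real (fst p ! i))"
    if "\<nu> \<in> msets_of_weight (vinc i k)" for \<nu>
  proof -
    have "real (k ! i + 1) = real (weight \<nu> i)"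
      using that assms unfolding msets_of_weight_def by (simp add: vinc_nth)
    then show ?thesis
      unfolding weight_def by (simp add: sum_mset_eq_sum_count[where 'b = real] of_nat_sum_mset
          multiset.map_comp comp_def)
  qed
  then show ?thesis
    using finite_msets_of_weight[of "vinc i k"] assms
    by (simp add: expansion_def vfact_vinc mterm_def sum.Sigma sum_distrib_left sum_distrib_right
        split_def ac_simps cong: sum.cong)
qed

lemma tdi_expansion:
  assumes "i \<le> d" "length k = d + 1"
  shows "tdi Ep ks l i (expansion k) = expansion (vinc i k)"
proof (intro ext)
  fix \<alpha> x
  let ?S = "Sigma (msets_of_weight (vinc i k)) set_mset"
  let ?Z = "{z \<in> ?S. fst (snd z) ! i = 0}"
  let ?R = "raised_pairs i (vinc i k)" and ?U = "unit_pairs i (vinc i k)"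
  have "finite ?S"
    using finite_msets_of_weight[of "vinc i k"] assms(2) by auto
  moreover have "?R \<subseteq> ?S" "?U \<subseteq> ?S"
    unfolding raised_pairs_def unit_pairs_def by auto
  ultimately have fin: "finite ?Z" "finite ?R" "finite ?U"
    by (auto intro: finite_subset)
  have split: "?S = ?Z \<union> (?R \<union> ?U)" and disj: "?Z \<inter> (?R \<union> ?U) = {}" "?R \<inter> ?U = {}"
    using assms(1) unfolding raised_pairs_def unit_pairs_def by (auto simp: unit_vec_nth)
  have "(\<Sum>z\<in>?S. mterm i \<alpha> x z) =
      (\<Sum>z\<in>?Z. mterm i \<alpha> x z) + ((\<Sum>z\<in>?R. mterm i \<alpha> x z) + (\<Sum>z\<in>?U. mterm i \<alpha> x z))"
    by (subst split) (simp only: sum.union_disjoint fin finite_UnI disj)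
  moreover have "(\<Sum>z\<in>?Z. mterm i \<alpha> x z) = 0"
    by (intro sum.neutral) (auto simp: mterm_def)
  ultimately show "tdi Ep ks l i (expansion k) \<alpha> x = expansion (vinc i k) \<alpha> x"
    by (simp add: tdi_expansion_eq_sum[OF assms] expansion_vinc_eq_sum[OF assms])
qed

lemma tdi_pow_expansion:
  assumes "i \<le> d" "length k = d + 1"
  shows "(tdi Ep ks l i ^^ n) (expansion k) = expansion (k[i := k ! i + n])"
proof (induction n)
  case (Suc n)
  have "vinc i (k[i := k ! i + n]) = k[i := k ! i + Suc n]"
    unfolding vinc_def using assms by simp
  with Suc show ?case
    using tdi_expansion[OF assms(1), of "k[i := k ! i + n]"] assms(2) by simp
qed simp

lemma foldr_tdi_expansion:
  assumes "distinct js" "set js \<subseteq> {..d}" "length k = d + 1"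
  shows "foldr (\<lambda>i G. (tdi Ep ks l i ^^ (k ! i)) \<circ> G) js id Fh =
    expansion (map (\<lambda>j. if j \<in> set js then k ! j else 0) [0..<d + 1])"
  using assms(1,2)
proof (induction js)
  case Nil
  then show ?case
    using expansion_zero by (simp add: map_replicate_const)
next
  case (Cons i js)
  let ?k = "map (\<lambda>j. if j \<in> set js then k ! j else 0) [0..<d + 1]"
  have "?k[i := ?k ! i + k ! i] = map (\<lambda>j. if j \<in> set (i # js) then k ! j else 0) [0..<d + 1]"
    using Cons.prems by (intro nth_equalityI) (auto simp: nth_list_update simp del: upt_Suc)
  with Cons show ?case
    using tdi_pow_expansion[of i ?k "k ! i"] by simp
qed

lemma tdk_eq_expansion:
  assumes "length k = d + 1"
  shows "tdk Ep ks l k Fh = expansion k"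
proof -
  have "map (\<lambda>j. if j \<in> set [0..<d + 1] then k ! j else 0) [0..<d + 1] = k"
    using assms by (intro nth_equalityI) (auto simp del: upt_Suc)
  then show ?thesis
    using foldr_tdi_expansion[of "[0..<d + 1]" k] assms unfolding tdk_def
    by (simp add: atLeastLessThanSuc_atLeastAtMost atLeast0AtMost del: upt_Suc)
qed

end

section \<open>The index set \<open>I(k)\<close>\<close>

lemma lexless_iff: "length p = length q \<Longrightarrow> lexless p q \<longleftrightarrow> p < q"
  unfolding lexless_def list_less_def lexord_take_index_conv by auto

lemma lexless_irrefl: "\<not> lexless p p"
  unfolding lexless_def by auto

lemma lexless_replicate_0:
  assumes "length q = n" "q \<noteq> replicate n 0"
  shows "lexless (replicate n 0) q"
proof -
  have ex: "\<exists>j. j < n \<and> q ! j \<noteq> 0"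
  proof (rule ccontr)
    assume "\<not> (\<exists>j. j < n \<and> q ! j \<noteq> 0)"
    then have "q = replicate n 0" using assms(1) by (intro nth_equalityI) auto
    then show False using assms(2) by simp
  qed
  define j where "j = (LEAST j. j < n \<and> q ! j \<noteq> 0)"
  have j: "j < n" "q ! j \<noteq> 0" using LeastI_ex[OF ex] unfolding j_def by auto
  have lt: "q ! t = 0" if "t < j" for t
    using not_less_Least[of t "\<lambda>j. j < n \<and> q ! j \<noteq> 0"] that j(1) unfolding j_def by auto
  have "take j (replicate n 0) = take j q"
    using j(1) assms(1) lt by (intro nth_equalityI) auto
  then show ?thesis unfolding lexless_def using j assms(1) by auto
qed

definition mon_mset :: "nat list \<Rightarrow> 'l mon \<Rightarrow> (nat list \<times> 'l idx) multiset" where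
  "mon_mset q m = Abs_multiset (\<lambda>p. if fst p = q then m (snd p) else 0)"

lemma count_mon_mset:
  assumes "finite {u. m u \<noteq> 0}"
  shows "count (mon_mset q m) = (\<lambda>p. if fst p = q then m (snd p) else 0)"
  unfolding mon_mset_def
proof (rule count_Abs_multiset)
  have sub: "{p. 0 < (if fst p = q then m (snd p) else 0)} \<subseteq> {q} \<times> {u. m u \<noteq> 0}" by auto
  have fin: "finite ({q} \<times> {u. m u \<noteq> 0})" using assms by simp
  show "finite {p. 0 < (if fst p = q then m (snd p) else 0)}"
    by (rule finite_subset[OF sub fin])
qed

lemma set_mon_mset:
  assumes "finite {u. m u \<noteq> 0}"
  shows "set_mset (mon_mset q m) = {q} \<times> {u. m u \<noteq> 0}"
  using count_mon_mset[OF assms, of q] by (auto simp: set_mset_def)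

definition mset_of_index :: "nat list list \<times> 'l mon list \<Rightarrow> (nat list \<times> 'l idx) multiset" where
  "mset_of_index z = (\<Sum>i<length (fst z). mon_mset (fst z ! i) (snd z ! i))"

definition index_of_mset :: "(nat list \<times> 'l idx) multiset \<Rightarrow> nat list list \<times> 'l mon list" where
  "index_of_mset \<nu> = (sorted_list_of_set (fst ` set_mset \<nu>),
            map (\<lambda>q u. count \<nu> (q, u)) (sorted_list_of_set (fst ` set_mset \<nu>)))"

lemma count_mset_of_index:
  assumes "\<forall>i<length qs. finite {u. (ms ! i) u \<noteq> 0}"
  shows "count (mset_of_index (qs, ms)) p =
    (\<Sum>i<length qs. if qs ! i = fst p then (ms ! i) (snd p) else 0)"
  unfolding mset_of_index_def using assms by (auto simp: count_sum count_mon_mset intro!: sum.cong)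

lemma sum_nth_delta:
  assumes "distinct qs" "j < length qs"
  shows "(\<Sum>i<length qs. if qs ! i = qs ! j then f i else 0) = (f j :: 'a :: comm_monoid_add)"
proof -
  have "(\<Sum>i<length qs. if qs ! i = qs ! j then f i else 0) =
      (\<Sum>i<length qs. if i = j then f i else 0)"
    using assms by (intro sum.cong refl) (auto simp: nth_eq_iff_index_eq)
  also have "\<dots> = f j" using assms(2) by simp
  finally show ?thesis .
qed

lemma sum_nth_delta_notin:
  assumes "q \<notin> set qs"
  shows "(\<Sum>i<length qs. if qs ! i = q then f i else 0) = (0 :: 'a :: comm_monoid_add)"
  using assms by (intro sum.neutral) (auto simp: in_set_conv_nth)

lemma sum_mset_sum:
  "finite I \<Longrightarrow> (\<Sum>p\<in>#(\<Sum>i\<in>I. M i). f p) = (\<Sum>i\<in>I. \<Sum>p\<in>#M i. (f p :: 'b :: comm_monoid_add))"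
  by (induction I rule: finite_induct) auto

lemma msize_eq_sum: "finite {u. m u \<noteq> 0} \<Longrightarrow> msize m = (\<Sum>u\<in>{u. m u \<noteq> 0}. m u)"
  unfolding msize_def by (simp add: Sum_any.expand_set)

lemma sum_singleton_times: "(\<Sum>p\<in>{q} \<times> U. h p) = (\<Sum>u\<in>U. (h (q, u) :: 'b :: comm_monoid_add))"
  by (rule sum.reindex_bij_witness[of _ "\<lambda>u. (q, u)" "\<lambda>p. snd p"]) auto

lemma weight_mon_mset:
  assumes "finite {u. m u \<noteq> 0}"
  shows "weight (mon_mset q m) j = msize m * q ! j"
proof -
  have "weight (mon_mset q m) j =
      (\<Sum>p\<in>set_mset (mon_mset q m). of_nat (count (mon_mset q m) p) * fst p ! j)"
    unfolding weight_def by (rule sum_mset_eq_sum_count)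
  also have "\<dots> = (\<Sum>p\<in>{q} \<times> {u. m u \<noteq> 0}. m (snd p) * q ! j)"
    unfolding set_mon_mset[OF assms] count_mon_mset[OF assms] by (intro sum.cong) auto
  also have "\<dots> = (\<Sum>u\<in>{u. m u \<noteq> 0}. m u * q ! j)"
    using sum_singleton_times[where q=q and U="{u. m u \<noteq> 0}" and h="\<lambda>p. m (snd p) * q ! j"] by simp
  also have "\<dots> = msize m * q ! j" by (simp add: msize_eq_sum[OF assms] sum_distrib_right)
  finally show ?thesis .
qed

lemma weight_mset_of_index:
  assumes "\<forall>i<length qs. finite {u. (ms ! i) u \<noteq> 0}"
  shows "weight (mset_of_index (qs, ms)) j = (\<Sum>i<length qs. msize (ms ! i) * qs ! i ! j)"
proof -
  have "weight (mset_of_index (qs, ms)) j = (\<Sum>i<length qs. weight (mon_mset (qs ! i) (ms ! i)) j)"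
    unfolding weight_def mset_of_index_def fst_conv snd_conv by (rule sum_mset_sum) simp
  also have "\<dots> = (\<Sum>i<length qs. msize (ms ! i) * qs ! i ! j)"
    using assms by (intro sum.cong refl weight_mon_mset) auto
  finally show ?thesis .
qed

lemma finite_mset_slice: "finite {u. (q, u) \<in># \<nu>}"
proof (rule finite_subset)
  show "{u. (q, u) \<in># \<nu>} \<subseteq> snd ` set_mset \<nu>"
    by (auto intro: image_eqI[rotated])
qed simp

lemma index_of_mset_parts:
  fixes \<nu> :: "(nat list \<times> 'l idx) multiset"
  defines "qs \<equiv> sorted_list_of_set (fst ` set_mset \<nu>)"
  shows "index_of_mset \<nu> = (qs, map (\<lambda>q u. count \<nu> (q, u)) qs)"
    and "distinct qs" and "set qs = fst ` set_mset \<nu>"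
    and    "\<forall>i<length qs. finite {u. (map (\<lambda>q u. count \<nu> (q, u)) qs ! i) u \<noteq> 0}"
  unfolding index_of_mset_def qs_def by (simp_all add: finite_mset_slice)

lemma mset_of_index_of_mset: "mset_of_index (index_of_mset (\<nu> :: (nat list \<times> 'l idx) multiset)) = \<nu>"
proof -
  define qs where "qs = sorted_list_of_set (fst ` set_mset \<nu>)"
  note P = index_of_mset_parts[of \<nu>, folded qs_def]
  show ?thesis
  proof (rule multiset_eqI)
    fix p
    have c: "count (mset_of_index (index_of_mset \<nu>)) p =
        (\<Sum>i<length qs. if qs ! i = fst p then count \<nu> (qs ! i, snd p) else 0)"
      unfolding P(1) using count_mset_of_index[OF P(4), of p] by (auto intro!: sum.cong)
    show "count (mset_of_index (index_of_mset \<nu>)) p = count \<nu> p"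
    proof (cases "fst p \<in> set qs")
      case True
      then obtain j where j: "j < length qs" "qs ! j = fst p" by (auto simp: in_set_conv_nth)
      show ?thesis
        unfolding c using sum_nth_delta[OF P(2) j(1), of "\<lambda>i. count \<nu> (qs ! i, snd p)"] j by simp
    next
      case False
      then have "p \<notin># \<nu>" using P(3) by force
      then show ?thesis unfolding c using sum_nth_delta_notin[OF False] by (simp add: not_in_iff)
    qed
  qed
qed

lemma sorted_wrt_lexless_iff:
  assumes "\<forall>q\<in>set qs. length q = n"
  shows "sorted_wrt lexless qs \<longleftrightarrow> sorted_wrt (<) qs"
proof
  assume "sorted_wrt lexless qs"
  then show "sorted_wrt (<) qs"
    by (rule sorted_wrt_mono_rel[rotated]) (use assms lexless_iff in auto)
next
  assume "sorted_wrt (<) qs"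
  then show "sorted_wrt lexless qs"
    by (rule sorted_wrt_mono_rel[rotated]) (use assms lexless_iff in auto)
qed

lemma coef_index_of_mset:
  fixes \<nu> :: "(nat list \<times> 'l idx) multiset"
  shows "coef (fst (index_of_mset \<nu>)) (snd (index_of_mset \<nu>)) x = mcoef \<nu> x"
proof -
  define qs where "qs = sorted_list_of_set (fst ` set_mset \<nu>)"
  note P = index_of_mset_parts[of \<nu>, folded qs_def]
  define H where "H = (\<lambda>q. \<Prod>e\<in>{e. count \<nu> (q, e) \<noteq> 0}. coef_factor (count \<nu> (q, e)) (q, e) x)"
  have "coef (fst (index_of_mset \<nu>)) (snd (index_of_mset \<nu>)) x = (\<Prod>i<length qs. H (qs ! i))"
    unfolding P(1) coef_def H_def coef_factor_def shifted_def by simp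
  also have "\<dots> = (\<Prod>q\<in>set qs. H q)"
  proof -
    have inj: "inj_on (nth qs) {..<length qs}" using P(2) by (intro inj_on_nth) auto
    have im: "nth qs ` {..<length qs} = set qs" by (auto simp: in_set_conv_nth)
    show ?thesis using prod.reindex[OF inj, of H] unfolding im by simp
  qed
  also have "\<dots> = (\<Prod>p\<in>Sigma (set qs) (\<lambda>q. {e. count \<nu> (q, e) \<noteq> 0}). coef_factor (count \<nu> p) p x)"
  proof -
    have fin: "\<forall>q\<in>set qs. finite {e. count \<nu> (q, e) \<noteq> 0}"
    proof
      fix q
      have "{e. count \<nu> (q, e) \<noteq> 0} \<subseteq> snd ` set_mset \<nu>"
        by (auto simp: count_eq_zero_iff[symmetric] intro: image_eqI[rotated])
      then show "finite {e. count \<nu> (q, e) \<noteq> 0}" by (rule finite_subset) simp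
    qed
    have "(\<Prod>q\<in>set qs. H q) = (\<Prod>(q, e)\<in>Sigma (set qs) (\<lambda>q. {e. count \<nu> (q, e) \<noteq> 0}).
        coef_factor (count \<nu> (q, e)) (q, e) x)"
      unfolding H_def by (rule prod.Sigma[OF finite_set fin])
    also have "(\<lambda>(q, e). coef_factor (count \<nu> (q, e)) (q, e) x) = (\<lambda>p. coef_factor (count \<nu> p) p x)"
      by auto
    finally show ?thesis .
  qed
  also have "Sigma (set qs) (\<lambda>q. {e. count \<nu> (q, e) \<noteq> 0}) = set_mset \<nu>"
    unfolding P(3) by (force simp: count_eq_zero_iff[symmetric])
  finally show ?thesis unfolding mcoef_def .
qed

lemma msum_index_of_mset:
  fixes \<nu> :: "(nat list \<times> 'l idx) multiset"
  shows "msum (snd (index_of_mset \<nu>)) = count (image_mset snd \<nu>)"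
proof
  fix u
  define qs where "qs = sorted_list_of_set (fst ` set_mset \<nu>)"
  note P = index_of_mset_parts[of \<nu>, folded qs_def]
  have "msum (snd (index_of_mset \<nu>)) u = (\<Sum>q\<in>set qs. count \<nu> (q, u))"
    unfolding P(1) msum_def by (simp add: comp_def sum_list_distinct_conv_sum_set[OF P(2)])
  also have "\<dots> = (\<Sum>p\<in>(\<lambda>q. (q, u)) ` set qs. count \<nu> p)"
    by (rule sum.reindex[symmetric, unfolded comp_def]) (auto simp: inj_on_def)
  also have "\<dots> = (\<Sum>p\<in>snd -` {u} \<inter> set_mset \<nu>. count \<nu> p)"
  proof (rule sum.mono_neutral_right)
    show "finite ((\<lambda>q. (q, u)) ` set qs)" by simp
    show "snd -` {u} \<inter> set_mset \<nu> \<subseteq> (\<lambda>q. (q, u)) ` set qs"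
      unfolding P(3) by (force intro: image_eqI[rotated])
    show "\<forall>p\<in>(\<lambda>q. (q, u)) ` set qs - snd -` {u} \<inter> set_mset \<nu>. count \<nu> p = 0"
      by (auto simp: not_in_iff)
  qed
  also have "\<dots> = count (image_mset snd \<nu>) u" by (simp add: count_image_mset)
  finally show "msum (snd (index_of_mset \<nu>)) u = count (image_mset snd \<nu>) u" .
qed

context tensor_expansion
begin

text \<open>Elements of \<open>I(k)\<close> involving an index outside \<open>E0\<close> contribute nothing, because the
  corresponding \<open>D\<^sub>o\<close> annihilates \<open>Fh\<close>.\<close>

definition Iset_E0 :: "nat list \<Rightarrow> (nat list list \<times> 'l mon list) set" where
  "Iset_E0 k = {z \<in> Iset d k. \<forall>m\<in>set (snd z). {e. m e \<noteq> 0} \<subseteq> E0}"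

lemma index_of_mset_in_Iset_E0:
  assumes \<nu>: "\<nu> \<in> msets_of_weight k"
  shows "index_of_mset \<nu> \<in> Iset_E0 k"
proof -
  define qs where "qs = sorted_list_of_set (fst ` set_mset \<nu>)"
  define ms where "ms = map (\<lambda>q u. count \<nu> (q, u)) qs"
  note P = index_of_mset_parts[of \<nu>, folded qs_def, folded ms_def]
  have sub: "set_mset \<nu> \<subseteq> nonzero_vecs \<times> E0" and w: "\<forall>j\<le>d. weight \<nu> j = k ! j"
    using \<nu> unfolding msets_of_weight_def by auto
  have qs: "\<forall>q\<in>set qs. length q = d + 1 \<and> lexless (replicate (d + 1) 0) q"
  proof
    fix q assume "q \<in> set qs"
    then have "q \<in> nonzero_vecs" using P(3) sub by auto
    then show "length q = d + 1 \<and> lexless (replicate (d + 1) 0) q"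
      using lexless_replicate_0[of q "d + 1"] unfolding nonzero_vecs_def by simp
  qed
  then have "sorted_wrt lexless qs"
    using sorted_wrt_lexless_iff[of qs "d + 1"] strict_sorted_list_of_set unfolding qs_def by auto
  moreover have ms: "finite {e. m e \<noteq> 0} \<and> {e. m e \<noteq> 0} \<subseteq> E0 \<and> m \<noteq> (\<lambda>_. 0)"
    if m: "m \<in> set ms" for m
  proof -
    obtain q where q: "q \<in> fst ` set_mset \<nu>" "m = (\<lambda>u. count \<nu> (q, u))"
      using m P(3) unfolding ms_def by auto
    then obtain u where u: "(q, u) \<in># \<nu>" by force
    have "{e. count \<nu> (q, e) \<noteq> 0} \<subseteq> E0" using sub by auto
    moreover have "(\<lambda>e. count \<nu> (q, e)) \<noteq> (\<lambda>_. 0)" using u by (metis count_eq_zero_iff)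
    moreover have "finite {e. count \<nu> (q, e) \<noteq> 0}" using finite_mset_slice[of q \<nu>] by simp
    ultimately show ?thesis unfolding q(2) by blast
  qed
  moreover have "(\<Sum>i<length qs. msize (ms ! i) * qs ! i ! j) = k ! j" if "j \<le> d" for j
    using weight_mset_of_index[OF P(4), of j] mset_of_index_of_mset[of \<nu>] P(1) w that by simp
  moreover have "length qs = length ms"
    unfolding ms_def by simp
  ultimately have "(qs, ms) \<in> Iset d k"
    using qs ms E0_subset unfolding Iset_def by blast
  then show ?thesis
    unfolding Iset_E0_def using P(1) ms by auto
qed

lemma Iset_E0D:
  assumes z: "(qs, ms) \<in> Iset_E0 k"
  shows "length qs = length ms" "distinct qs" "sorted_wrt (<) qs"
    "\<forall>q\<in>set qs. length q = d + 1 \<and> q \<noteq> replicate (d + 1) 0"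
    "\<forall>i<length qs. finite {u. (ms ! i) u \<noteq> 0}"
    "\<forall>i<length qs. {u. (ms ! i) u \<noteq> 0} \<subseteq> E0"
    "\<forall>i<length qs. ms ! i \<noteq> (\<lambda>_. 0)"
    "\<forall>j\<le>d. (\<Sum>i<length qs. msize (ms ! i) * qs ! i ! j) = k ! j"
proof -
  have I: "(qs, ms) \<in> Iset d k" and E: "\<forall>m\<in>set ms. {e. m e \<noteq> 0} \<subseteq> E0"
    using z unfolding Iset_E0_def by auto
  show l: "length qs = length ms" using I unfolding Iset_def by auto
  have q: "\<forall>q\<in>set qs. length q = d + 1 \<and> lexless (replicate (d + 1) 0) q"
    using I unfolding Iset_def by auto
  then show "\<forall>q\<in>set qs. length q = d + 1 \<and> q \<noteq> replicate (d + 1) 0" using lexless_irrefl by blast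
  have "sorted_wrt lexless qs" using I unfolding Iset_def by auto
  then show s: "sorted_wrt (<) qs" using sorted_wrt_lexless_iff[of qs "d + 1"] q by auto
  then show "distinct qs" using strict_sorted_iff by blast
  have m: "\<forall>m\<in>set ms. finite {e. m e \<noteq> 0} \<and> m \<noteq> (\<lambda>_. 0)" using I unfolding Iset_def by auto
  have mi: "ms ! i \<in> set ms" if "i < length qs" for i using l that by simp
  show "\<forall>i<length qs. finite {u. (ms ! i) u \<noteq> 0}" using m mi by blast
  show "\<forall>i<length qs. ms ! i \<noteq> (\<lambda>_. 0)" using m mi by blast
  show "\<forall>i<length qs. {u. (ms ! i) u \<noteq> 0} \<subseteq> E0" using E mi by blast
  show "\<forall>j\<le>d. (\<Sum>i<length qs. msize (ms ! i) * qs ! i ! j) = k ! j"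
    using I unfolding Iset_def by auto
qed

lemma count_mset_of_index_nth:
  assumes "(qs, ms) \<in> Iset_E0 k" "j < length qs"
  shows "count (mset_of_index (qs, ms)) (qs ! j, u) = (ms ! j) u"
proof -
  have "count (mset_of_index (qs, ms)) (qs ! j, u) =
      (\<Sum>i<length qs. if qs ! i = qs ! j then (ms ! i) u else 0)"
    using count_mset_of_index[OF Iset_E0D(5)[OF assms(1)], of "(qs ! j, u)"]
    by (auto intro!: sum.cong)
  also have "\<dots> = (ms ! j) u" by (rule sum_nth_delta[OF Iset_E0D(2)[OF assms(1)] assms(2)])
  finally show ?thesis .
qed

lemma in_mset_of_indexE:
  assumes "(qs, ms) \<in> Iset_E0 k" "p \<in># mset_of_index (qs, ms)"
  obtains j where "j < length qs" "qs ! j = fst p" "(ms ! j) (snd p) \<noteq> 0"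
proof -
  have "count (mset_of_index (qs, ms)) p \<noteq> 0"
    using assms(2) by simp
  then have "(\<Sum>i<length qs. if qs ! i = fst p then (ms ! i) (snd p) else 0) \<noteq> 0"
    using count_mset_of_index[OF Iset_E0D(5)[OF assms(1)], of p] by argo
  then obtain j where "j \<in> {..<length qs}" "(if qs ! j = fst p then (ms ! j) (snd p) else 0) \<noteq> 0"
    by (rule sum.not_neutral_contains_not_neutral)
  with that show thesis by (auto split: if_splits)
qed

lemma index_of_mset_of_index:
  assumes z: "(qs, ms) \<in> Iset_E0 k"
  shows "index_of_mset (mset_of_index (qs, ms)) = (qs, ms)"
proof -
  note F = Iset_E0D[OF z]
  let ?\<nu> = "mset_of_index (qs, ms)"
  have S: "fst ` set_mset ?\<nu> = set qs"
  proof
    show "fst ` set_mset ?\<nu> \<subseteq> set qs"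
    proof
      fix q assume "q \<in> fst ` set_mset ?\<nu>"
      then obtain p where p: "p \<in># ?\<nu>" "q = fst p" by blast
      obtain j where "j < length qs" "qs ! j = fst p" using in_mset_of_indexE[OF z p(1)] by blast
      then show "q \<in> set qs" using p(2) nth_mem by metis
    qed
    show "set qs \<subseteq> fst ` set_mset ?\<nu>"
    proof
      fix q assume "q \<in> set qs"
      then obtain j where j: "j < length qs" "q = qs ! j" by (auto simp: in_set_conv_nth)
      obtain u where u: "(ms ! j) u \<noteq> 0" using F(7) j by (metis (full_types) ext)
      have "0 < count ?\<nu> (qs ! j, u)" using count_mset_of_index_nth[OF z j(1), of u] u by simp
      then have "(qs ! j, u) \<in># ?\<nu>" by (simp only: count_greater_zero_iff)
      then show "q \<in> fst ` set_mset ?\<nu>" using j by force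
    qed
  qed
  have sl: "sorted_list_of_set (set qs) = qs"
    by (rule strict_sorted_equal[OF F(3) strict_sorted_list_of_set]) simp
  have ms: "map (\<lambda>q u. count ?\<nu> (q, u)) qs = ms"
  proof (rule nth_equalityI)
    show "length (map (\<lambda>q u. count ?\<nu> (q, u)) qs) = length ms" using F(1) by simp
    fix j assume "j < length (map (\<lambda>q u. count ?\<nu> (q, u)) qs)"
    then have j: "j < length qs" by simp
    show "map (\<lambda>q u. count ?\<nu> (q, u)) qs ! j = ms ! j"
      using j count_mset_of_index_nth[OF z j] by (simp add: fun_eq_iff)
  qed
  show ?thesis unfolding index_of_mset_def S sl ms by simp
qed

lemma mset_of_index_in_msets_of_weight:
  assumes z: "(qs, ms) \<in> Iset_E0 k"
  shows "mset_of_index (qs, ms) \<in> msets_of_weight k"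
proof -
  note F = Iset_E0D[OF z]
  have "set_mset (mset_of_index (qs, ms)) \<subseteq> nonzero_vecs \<times> E0"
  proof
    fix p assume "p \<in># mset_of_index (qs, ms)"
    then obtain j where j: "j < length qs" "qs ! j = fst p" "(ms ! j) (snd p) \<noteq> 0"
      using in_mset_of_indexE[OF z] by blast
    have "qs ! j \<in> set qs" using j(1) by (rule nth_mem)
    then have "length (qs ! j) = d + 1 \<and> qs ! j \<noteq> replicate (d + 1) 0" using F(4) by blast
    then have "fst p \<in> nonzero_vecs" unfolding nonzero_vecs_def using j(2) by simp
    moreover have "snd p \<in> E0" using F(6) j by blast
    ultimately show "p \<in> nonzero_vecs \<times> E0" by (simp add: mem_Times_iff)
  qed
  moreover have "\<forall>j\<le>d. weight (mset_of_index (qs, ms)) j = k ! j"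
    using weight_mset_of_index[OF F(5)] F(8) by simp
  ultimately show ?thesis unfolding msets_of_weight_def by blast
qed

lemma bij_betw_index_of_mset: "bij_betw index_of_mset (msets_of_weight k) (Iset_E0 k)"
  by (rule bij_betw_byWitness[where f' = mset_of_index])
    (auto simp: mset_of_index_of_mset index_of_mset_in_Iset_E0 index_of_mset_of_index
      mset_of_index_in_msets_of_weight)

lemma tDm_index_of_mset:
  fixes \<nu> :: "(nat list \<times> 'l idx) multiset"
  shows "tDm Ep ks l (msum (snd (index_of_mset \<nu>))) Fh = D_mset \<nu>"
proof -
  have fin: "finite {e. msum (snd (index_of_mset \<nu>)) e \<noteq> 0}"
    unfolding msum_index_of_mset by (simp add: count_eq_zero_iff[symmetric])
  have fin': "finite {e. count (image_mset snd \<nu>) e \<noteq> 0}"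
    by (simp add: count_eq_zero_iff[symmetric])
  have "tDm Ep ks l (msum (snd (index_of_mset \<nu>))) Fh = tDm Ep ks l (count (image_mset snd \<nu>)) Fh"
    by (simp only: msum_index_of_mset)
  also have "\<dots> = tD_mset (Abs_multiset (count (image_mset snd \<nu>))) Fh"
    by (rule tDm_eq_tD_mset[OF admissible_Fh fin'])
  finally show ?thesis unfolding D_mset_def count_inverse .
qed

lemma tDm_eq_0_outside_Iset_E0:
  assumes "(qs, ms) \<in> Iset d k" "(qs, ms) \<notin> Iset_E0 k"
  shows "tDm Ep ks l (msum ms) Fh = (\<lambda>\<alpha> x. 0)"
proof -
  obtain m e where me: "m \<in> set ms" "m e \<noteq> 0" "e \<notin> E0" using assms unfolding Iset_E0_def by auto
  have finm: "\<forall>m\<in>set ms. finite {e. m e \<noteq> 0}" using assms(1) unfolding Iset_def by auto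
  have "{e. msum ms e \<noteq> 0} \<subseteq> (\<Union>m\<in>set ms. {e. m e \<noteq> 0})"
    unfolding msum_def by (auto simp: sum_list_eq_0_iff)
  then have fin: "finite {e. msum ms e \<noteq> 0}" by (rule finite_subset) (use finm in auto)
  have "m e \<le> msum ms e" unfolding msum_def by (rule member_le_sum_list) (use me(1) in auto)
  then have "0 < count (Abs_multiset (msum ms)) e"
    using me(2) count_Abs_multiset[of "msum ms"] fin by (simp add: not_less_zero)
  then have e: "e \<in># Abs_multiset (msum ms)" by simp
  show ?thesis unfolding tDm_eq_tD_mset[OF admissible_Fh fin]
    by (rule tD_mset_eq_0_if_independent[OF admissible_Fh e]) (use me(3) S0_subset Ep_subset in auto)
qed

lemma expansion_eq_sum_Iset:
  assumes "length k = d + 1"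
  shows "expansion k \<alpha> x = vfact k * Sum_any (\<lambda>(qs, ms). if (qs, ms) \<in> Iset d k
              then coef qs ms x * tDm Ep ks l (msum ms) Fh \<alpha> x else 0)"
proof -
  let ?f = "\<lambda>(qs, ms).
    if (qs, ms) \<in> Iset d k then coef qs ms x * tDm Ep ks l (msum ms) Fh \<alpha> x else 0"
  have "finite (Iset_E0 k)"
    using bij_betw_finite[OF bij_betw_index_of_mset] finite_msets_of_weight[OF assms] by blast
  moreover have "{z. ?f z \<noteq> 0} \<subseteq> Iset_E0 k"
  proof
    fix z assume "z \<in> {z. ?f z \<noteq> 0}"
    moreover obtain qs ms where "z = (qs, ms)" by fastforce
    ultimately show "z \<in> Iset_E0 k"
      using tDm_eq_0_outside_Iset_E0[of qs ms k]
      by (cases "(qs, ms) \<in> Iset_E0 k") (auto split: if_splits)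
  qed
  ultimately have "Sum_any ?f = (\<Sum>z\<in>Iset_E0 k. ?f z)"
    by (rule Sum_any.expand_superset)
  also have "\<dots> = (\<Sum>z\<in>Iset_E0 k. coef (fst z) (snd z) x * tDm Ep ks l (msum (snd z)) Fh \<alpha> x)"
    by (intro sum.cong) (auto simp: Iset_E0_def)
  also have "\<dots> = (\<Sum>\<nu>\<in>msets_of_weight k. mcoef \<nu> x * D_mset \<nu> \<alpha> x)"
    by (simp add: sum.reindex_bij_betw[OF bij_betw_index_of_mset, symmetric] coef_index_of_mset
        tDm_index_of_mset)
  finally show ?thesis
    unfolding expansion_def by simp
qed

end

lemma finite_valid_mon:
  assumes "finite (Ep l)"
  shows "finite {\<alpha>. valid_mon Ep ks l \<alpha>}"
proof (rule finite_subset)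
  show "{\<alpha>. valid_mon Ep ks l \<alpha>} \<subseteq> {f. \<forall>x. (x \<in> Ep l \<longrightarrow> f x \<in> {0..ks}) \<and> (x \<notin> Ep l \<longrightarrow> f x = 0)}"
    unfolding valid_mon_def by auto
  show "finite {f. \<forall>x. (x \<in> Ep l \<longrightarrow> f x \<in> {0..ks}) \<and> (x \<notin> Ep l \<longrightarrow> f x = (0::nat))}"
    by (rule finite_set_of_finite_funs[OF assms]) simp
qed

lemma (in tensor_ops) in_tens_imp_admissible:
  assumes "in_tens d Ep ks l Fh" "finite (Ep l)"
  obtains S0 where "finite S0" "S0 \<subseteq> Eset d" "admissible S0 Fh"
proof -
  let ?V = "{\<alpha>. valid \<alpha>}"
  have "\<forall>\<alpha>\<in>?V. \<exists>S. finite S \<and> S \<subseteq> Eset d \<and> depends_only_on S (Fh \<alpha>)"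
    using assms(1) smooth_fin_imp_depends_only_on unfolding in_tens_def by blast
  then obtain S where S: "\<And>\<alpha>. valid \<alpha> \<Longrightarrow> finite (S \<alpha>) \<and> S \<alpha> \<subseteq> Eset d \<and> depends_only_on (S \<alpha>) (Fh \<alpha>)"
    by (metis mem_Collect_eq)
  have "smooth (Fh \<alpha>) \<and> depends_only_on (\<Union>\<alpha>\<in>?V. S \<alpha>) (Fh \<alpha>)" for \<alpha>
  proof (cases "valid \<alpha>")
    case True
    then show ?thesis
      using assms(1) S[OF True] unfolding in_tens_def
      by (blast intro: smooth_fin_imp_smooth depends_only_on_mono)
  next
    case False
    then show ?thesis
      using assms(1) unfolding in_tens_def by (simp add: smooth_const depends_only_on_const)
  qed
  then have "admissible (\<Union>\<alpha>\<in>?V. S \<alpha>) Fh"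
    using assms(1) unfolding admissible_def in_tens_def by blast
  moreover have "finite (\<Union>\<alpha>\<in>?V. S \<alpha>)"
    using finite_valid_mon[of Ep l ks, OF assms(2)] S by blast
  moreover have "(\<Union>\<alpha>\<in>?V. S \<alpha>) \<subseteq> Eset d"
    using S by blast
  ultimately show thesis by (rule that[rotated 2])
qed

theorem lemma3p5:
  fixes d ks :: nat and Ep :: "'l::finite \<Rightarrow> ('l \<times> nat list) set" and l :: 'l
    and k :: "nat list" and Fh :: "('l \<times> nat list \<Rightarrow> nat) \<Rightarrow> ('l \<times> nat list \<Rightarrow> real) \<Rightarrow> real"
  assumes "1 \<le> d"
    and "\<forall>l'. finite (Ep l') \<and> Ep l' \<subseteq> Eset d"
    and "length k = d + 1"
    and "in_tens d Ep ks l Fh"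
  shows "tdk Ep ks l k Fh =
    (\<lambda>\<alpha> x. vfact k * Sum_any (\<lambda>(qs, ms). if (qs, ms) \<in> Iset d k
              then coef qs ms x * tDm Ep ks l (msum ms) Fh \<alpha> x else 0))"
proof -
  \<comment> \<open>The argument works for every \<open>d\<close>.\<close>
  interpret tensor_ops Ep ks l .
  obtain S0 where S0: "finite S0" "S0 \<subseteq> Eset d" "admissible S0 Fh"
    using in_tens_imp_admissible assms(2,4) by blast
  interpret tensor_expansion Ep ks l d "S0 \<union> Ep l" S0 Fh
    using S0 assms(2) by unfold_locales auto
  show ?thesis
    using tdk_eq_expansion[OF assms(3)] expansion_eq_sum_Iset[OF assms(3)] by auto
qed

end
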